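(* There exists a countable planar $\Pi$-graph that contains the Farey graph as an induced subgraph but is not a minor of the Farey graph.
   Context: Graphs are simple and may be infinite. The Farey graph is the graph with vertex set $\mathbb{Q}\cup\{\infty\}$ in which two rationals $a/b$ and $c/d$ written in lowest terms (allowing $\infty=(\pm1)/0$) are adjacent if and only if $ad-bc=\pm1$. A graph is infinitely edge-connected if it has at least two vertices and $G-E'$ is connected for every finite set $E'$ of edges. Paths are independent if they are internally vertex-disjoint. A $\Pi$-graph is an infinitely edge-connected graph that does not contain infinitely many independent paths between any two of its vertices. A graph $H$ is a minor of $G$ if there are pairwise disjoint non-empty vertex sets $V_h\subseteq V(G)$ ($h\in V(H)$), each inducing a connected subgraph of $G$, such that for every edge $hh'$ of $H$ there is an edge of $G$ between $V_h$ and $V_{h'}$. *)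

theory Defs
  imports "HOL-Analysis.Analysis"
begin

definition simple_graph :: "'v set \<Rightarrow> ('v \<Rightarrow> 'v \<Rightarrow> bool) \<Rightarrow> bool" where
  "simple_graph V E \<longleftrightarrow>
     (\<forall>u v. E u v \<longrightarrow> u \<in> V \<and> v \<in> V \<and> u \<noteq> v \<and> E v u)"

definition walk_in :: "'v set \<Rightarrow> ('v \<Rightarrow> 'v \<Rightarrow> bool) \<Rightarrow> 'v list \<Rightarrow> bool" where
  "walk_in S E p \<longleftrightarrow> p \<noteq> [] \<and> set p \<subseteq> S \<and>
     (\<forall>i. Suc i < length p \<longrightarrow> E (p ! i) (p ! Suc i))"

definition path_in :: "'v set \<Rightarrow> ('v \<Rightarrow> 'v \<Rightarrow> bool) \<Rightarrow> 'v list \<Rightarrow> bool" where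
  "path_in S E p \<longleftrightarrow> walk_in S E p \<and> distinct p"

definition connected_on :: "'v set \<Rightarrow> ('v \<Rightarrow> 'v \<Rightarrow> bool) \<Rightarrow> bool" where
  "connected_on S E \<longleftrightarrow>
     (\<forall>u\<in>S. \<forall>v\<in>S. \<exists>p. walk_in S E p \<and> hd p = u \<and> last p = v)"

definition delete_edges :: "('v \<Rightarrow> 'v \<Rightarrow> bool) \<Rightarrow> 'v set set \<Rightarrow> 'v \<Rightarrow> 'v \<Rightarrow> bool" where
  "delete_edges E F u v \<longleftrightarrow> E u v \<and> {u, v} \<notin> F"

definition inf_edge_connected :: "'v set \<Rightarrow> ('v \<Rightarrow> 'v \<Rightarrow> bool) \<Rightarrow> bool" where
  "inf_edge_connected V E \<longleftrightarrow>
     (\<exists>u\<in>V. \<exists>v\<in>V. u \<noteq> v) \<and>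
     (\<forall>F. finite F \<longrightarrow> connected_on V (delete_edges E F))"

definition inner :: "'v list \<Rightarrow> 'v set" where
  "inner p = set (butlast (tl p))"

definition inf_indep_paths :: "'v set \<Rightarrow> ('v \<Rightarrow> 'v \<Rightarrow> bool) \<Rightarrow> 'v \<Rightarrow> 'v \<Rightarrow> bool" where
  "inf_indep_paths V E u v \<longleftrightarrow>
     (\<exists>P. infinite P \<and>
          (\<forall>p\<in>P. path_in V E p \<and> hd p = u \<and> last p = v) \<and>
          (\<forall>p\<in>P. \<forall>q\<in>P. p \<noteq> q \<longrightarrow> inner p \<inter> inner q = {}))"

definition Pi_graph :: "'v set \<Rightarrow> ('v \<Rightarrow> 'v \<Rightarrow> bool) \<Rightarrow> bool" where
  "Pi_graph V E \<longleftrightarrow> inf_edge_connected V E \<and>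
     (\<forall>u\<in>V. \<forall>v\<in>V. u \<noteq> v \<longrightarrow> \<not> inf_indep_paths V E u v)"

definition is_minor :: "'h set \<Rightarrow> ('h \<Rightarrow> 'h \<Rightarrow> bool) \<Rightarrow> 'g set \<Rightarrow> ('g \<Rightarrow> 'g \<Rightarrow> bool) \<Rightarrow> bool" where
  "is_minor VH EH VG EG \<longleftrightarrow>
     (\<exists>B :: 'h \<Rightarrow> 'g set.
        (\<forall>h\<in>VH. B h \<noteq> {} \<and> B h \<subseteq> VG \<and> connected_on (B h) EG) \<and>
        (\<forall>h\<in>VH. \<forall>h'\<in>VH. h \<noteq> h' \<longrightarrow> B h \<inter> B h' = {}) \<and>
        (\<forall>h\<in>VH. \<forall>h'\<in>VH. EH h h' \<longrightarrow> (\<exists>x\<in>B h. \<exists>y\<in>B h'. EG x y)))"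

definition induced_subgraph_emb :: "'h set \<Rightarrow> ('h \<Rightarrow> 'h \<Rightarrow> bool) \<Rightarrow> 'g set \<Rightarrow> ('g \<Rightarrow> 'g \<Rightarrow> bool) \<Rightarrow> bool" where
  "induced_subgraph_emb VH EH VG EG \<longleftrightarrow>
     (\<exists>f. inj_on f VH \<and> f ` VH \<subseteq> VG \<and>
          (\<forall>x\<in>VH. \<forall>y\<in>VH. EG (f x) (f y) \<longleftrightarrow> EH x y))"

definition planar :: "'v set \<Rightarrow> ('v \<Rightarrow> 'v \<Rightarrow> bool) \<Rightarrow> bool" where
  "planar V E \<longleftrightarrow>
     (\<exists>(pos :: 'v \<Rightarrow> real \<times> real) (\<gamma> :: 'v \<Rightarrow> 'v \<Rightarrow> real \<Rightarrow> real \<times> real).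
        inj_on pos V \<and>
        (\<forall>u v. E u v \<longrightarrow> arc (\<gamma> u v) \<and> pathstart (\<gamma> u v) = pos u \<and>
               pathfinish (\<gamma> u v) = pos v \<and>
               path_image (\<gamma> u v) \<inter> pos ` V = {pos u, pos v}) \<and>
        (\<forall>u v u' v'. E u v \<longrightarrow> E u' v' \<longrightarrow> {u, v} \<noteq> {u', v'} \<longrightarrow>
               path_image (\<gamma> u v) \<inter> path_image (\<gamma> u' v') \<subseteq> pos ` V))"

text \<open>The Farey graph on Q \<union> {\<infinity>}: None stands for \<infinity> = 1/0, a rational q stands
  for its reduced fraction (quotient_of q) with positive denominator.\<close>
definition farey_frac :: "rat option \<Rightarrow> int \<times> int" where
  "farey_frac x = (case x of None \<Rightarrow> (1, 0) | Some q \<Rightarrow> quotient_of q)"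

definition farey_adj :: "rat option \<Rightarrow> rat option \<Rightarrow> bool" where
  "farey_adj x y \<longleftrightarrow>
     (let (a, b) = farey_frac x; (c, d) = farey_frac y in \<bar>a * d - b * c\<bar> = 1)"

end

(*
  The witness is the Farey graph with an apex w joined to 0, 1/2, 1 and to dyadic rationals
  converging to an irrational s in (0, 1).

  It is not a minor of the Farey graph because w, 0, 1/2, 1 span a K4, whereas the Farey graph has
  no K4 minor: every finite set of Farey vertices contains a vertex with at most two neighbours in
  the set, these being adjacent (take the vertex of largest denominator; its neighbours of smaller
  denominator are its two Stern-Brocot parents), and deleting such a vertex from a K4 model with
  finite branch sets leaves a K4 model.

  It is planar: rationals lie on the x-axis and Farey edges are parabolic arches above it, which
  meet only at common ends since Farey intervals are nested or disjoint; infinity and w lie below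
  the axis and are joined to their neighbours by segments.

  It is infinitely edge-connected: every Farey edge xy lies on infinitely many pairwise
  edge-disjoint x-y walks (the images of the Stern-Brocot rows under the unimodular map sending
  the edge from 0 to infinity to xy), every vertex is connected to infinity, and w has infinitely
  many edges.

  Finally, any two vertices are separated, apart from a possible direct edge, by a finite set,
  which rules out infinitely many independent paths: a rational q by the ends of a small Farey
  interval around q, the finitely many neighbours of q outside it and the finitely many apex
  neighbours inside it (they accumulate only at the irrational s); w from infinity by {0, 1}.
*)

theory Submission
  imports Defs "HOL-Library.Countable"
begin

section \<open>Reduced fractions and Farey adjacency\<close>

definition rat_num :: "rat \<Rightarrow> int" where
  "rat_num q = fst (quotient_of q)"

definition rat_den :: "rat \<Rightarrow> int" where
  "rat_den q = snd (quotient_of q)"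

lemma rat_den_pos: "rat_den q > 0"
  by (simp add: rat_den_def quotient_of_denom_pos')

lemma coprime_rat_num_den: "coprime (rat_num q) (rat_den q)"
  by (metis rat_num_def rat_den_def prod.collapse quotient_of_coprime)

lemma rat_num_den_eq: "q = of_int (rat_num q) / of_int (rat_den q)"
  by (metis rat_num_def rat_den_def prod.collapse quotient_of_div)

lemma rat_num_den_of_fraction:
  assumes "b > 0" "coprime a b"
  shows "rat_num (of_int a / of_int b) = a" "rat_den (of_int a / of_int b) = b"
proof -
  have "quotient_of (of_int a / of_int b) = (a, b)"
    using assms by (simp add: Fract_of_int_quotient[symmetric] quotient_of_Fract)
  then show "rat_num (of_int a / of_int b) = a" "rat_den (of_int a / of_int b) = b"
    by (auto simp: rat_num_def rat_den_def)
qed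

lemma rat_num_den_of_int [simp]: "rat_num (of_int k) = k" "rat_den (of_int k) = 1"
  by (simp_all add: rat_num_def rat_den_def)

lemma rat_den_1_imp_int: "rat_den q = 1 \<Longrightarrow> q = of_int (rat_num q)"
  using rat_num_den_eq[of q] by simp

lemma rat_less_iff_cross: "x < y \<longleftrightarrow> rat_num x * rat_den y < rat_num y * rat_den x"
  by (simp add: rat_less_code rat_num_def rat_den_def case_prod_unfold Let_def mult.commute)

lemma rat_eq_iff_cross: "x = y \<longleftrightarrow> rat_num x * rat_den y = rat_num y * rat_den x"
  using rat_less_iff_cross[of x y] rat_less_iff_cross[of y x]
    by (metis linorder_neqE not_less_iff_gr_or_eq)

lemma coprime_if_lincomb_eq_1: "x * s + y * t = (1::int) \<Longrightarrow> coprime s t"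
  by (rule coprimeI) (metis dvd_add dvd_mult)

definition det2 :: "int \<times> int \<Rightarrow> int \<times> int \<Rightarrow> int" where
  "det2 P Q = fst P * snd Q - snd P * fst Q"

lemma farey_adj_iff_det2: "farey_adj x y \<longleftrightarrow> \<bar>det2 (farey_frac x) (farey_frac y)\<bar> = 1"
  by (simp add: farey_adj_def det2_def case_prod_unfold Let_def mult.commute)

lemma farey_frac_Some: "farey_frac (Some q) = (rat_num q, rat_den q)"
  by (simp add: farey_frac_def rat_num_def rat_den_def)

lemma farey_adj_Some_Some:
  "farey_adj (Some x) (Some y) \<longleftrightarrow> \<bar>rat_num x * rat_den y - rat_den x * rat_num y\<bar> = 1"
  by (simp add: farey_adj_def farey_frac_Some)

lemma farey_adj_None_Some: "farey_adj None (Some y) \<longleftrightarrow> rat_den y = 1"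
  using rat_den_pos[of y] by (simp add: farey_adj_def farey_frac_def rat_den_def case_prod_unfold)

lemma farey_adj_Some_None: "farey_adj (Some y) None \<longleftrightarrow> rat_den y = 1"
  using rat_den_pos[of y] by (simp add: farey_adj_def farey_frac_def rat_den_def case_prod_unfold)

lemma farey_adj_None_None: "\<not> farey_adj None None"
  by (simp add: farey_adj_def farey_frac_def)

lemma farey_adj_sym: "farey_adj x y \<Longrightarrow> farey_adj y x"
  by (simp add: farey_adj_iff_det2 det2_def abs_minus_commute algebra_simps)

lemma farey_adj_commute: "farey_adj x y \<longleftrightarrow> farey_adj y x"
  using farey_adj_sym by blast

lemma farey_adj_irrefl: "\<not> farey_adj x x"
  by (simp add: farey_adj_iff_det2 det2_def)

lemma farey_adj_0_half_1:
  "farey_adj (Some 0) (Some (1/2))" "farey_adj (Some (1/2)) (Some 1)" "farey_adj (Some 0) (Some 1)"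
proof -
  have "rat_num (1/2) = 1" "rat_den (1/2) = 2"
    using rat_num_den_of_fraction[of 2 1] by simp_all
  then show "farey_adj (Some 0) (Some (1/2))" "farey_adj (Some (1/2)) (Some 1)"
    "farey_adj (Some 0) (Some 1)"
    by (simp_all add: farey_adj_Some_Some rat_num_def rat_den_def)
qed

lemma farey_den_between:
  assumes adj: "farey_adj (Some x) (Some y)" and "x < z" "z < y"
  shows "rat_den z \<ge> rat_den x + rat_den y"
proof -
  define a b c d r s
    where "a = rat_num x" "b = rat_den x" "c = rat_num y" "d = rat_den y" "r = rat_num z" "s = rat_den z"
  note defs = a_b_c_d_r_s_def
  have "b > 0" "d > 0" using rat_den_pos by (auto simp: defs)
  have "a * d < c * b" using rat_less_iff_cross[of x y] assms by (simp add: defs)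
  moreover have "\<bar>a * d - b * c\<bar> = 1" using adj by (simp add: farey_adj_Some_Some defs)
  ultimately have det: "b * c - a * d = 1" by (auto simp: abs_if algebra_simps)
  have xz: "r * b - a * s \<ge> 1" using rat_less_iff_cross[of x z] assms
    by (simp add: defs algebra_simps)
  have zy: "c * s - r * d \<ge> 1" using rat_less_iff_cross[of z y] assms
    by (simp add: defs algebra_simps)
  have "b * (c * s - r * d) + d * (r * b - a * s) = s * (b * c - a * d)"
    by (simp add: algebra_simps)
  then have "s = b * (c * s - r * d) + d * (r * b - a * s)" using det by simp
  also have "\<dots> \<ge> b + d"
    using mult_left_mono[OF xz, of d] mult_left_mono[OF zy, of b] \<open>b > 0\<close> \<open>d > 0\<close> by linarith
  finally show ?thesis by (simp add: defs)
qed

text \<open>Farey edges do not cross.\<close>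

lemma farey_adj_inside:
  assumes adj: "farey_adj (Some x) (Some y)" and xz: "x < z" and zy: "z < y"
    and adj_zt: "farey_adj (Some z) t" and "t \<noteq> Some x" "t \<noteq> Some y"
  shows "\<exists>t'. t = Some t' \<and> x < t' \<and> t' < y"
proof (cases t)
  case None
  then show ?thesis
    using adj_zt farey_den_between[OF adj xz zy] rat_den_pos[of x] rat_den_pos[of y]
    by (simp add: farey_adj_Some_None)
next
  case (Some t')
  have den_z: "rat_den z \<ge> rat_den x + rat_den y" using farey_den_between[OF adj xz zy] .
  have adj': "farey_adj (Some z) (Some t')" using adj_zt Some by simp
  have "\<not> y < t'"
  proof
    assume "y < t'"
    then show False
      using farey_den_between[OF adj' zy] den_z rat_den_pos[of x] rat_den_pos[of t'] by simp
  qed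
  moreover have "\<not> t' < x"
  proof
    assume "t' < x"
    then show False
      using farey_den_between[OF farey_adj_sym[OF adj'] _ xz] den_z rat_den_pos[of y] rat_den_pos[of t']
      by simp
  qed
  ultimately show ?thesis using assms Some by (auto simp: order.order_iff_strict)
qed

lemma diff_fractions:
  "b \<noteq> 0 \<Longrightarrow> d \<noteq> 0 \<Longrightarrow>
    (of_int a / of_int b - of_int c / of_int d :: rat) = of_int (a * d - b * c) / of_int (b * d)"
  by (simp add: field_simps)

lemma farey_adj_abs_diff:
  assumes "farey_adj (Some v) (Some z)"
  shows "\<bar>v - z\<bar> = 1 / of_int (rat_den v * rat_den z)"
proof -
  define N where "N = rat_num v * rat_den z - rat_den v * rat_num z"
  have "rat_den v > 0" "rat_den z > 0" using rat_den_pos by auto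
  have "v - z = of_int N / of_int (rat_den v * rat_den z)"
    using diff_fractions \<open>rat_den v > 0\<close> \<open>rat_den z > 0\<close>
      by (metis N_def less_irrefl rat_num_den_eq)
  moreover have "N \<in> {1, -1}"
    using assms by (auto simp: N_def farey_adj_Some_Some abs_if split: if_splits)
  ultimately show ?thesis using \<open>rat_den v > 0\<close> \<open>rat_den z > 0\<close> by auto
qed

lemma farey_adj_fractions:
  assumes "b > 0" "d > 0" "\<bar>a * d - b * c\<bar> = 1"
  shows "farey_adj (Some (of_int a / of_int b)) (Some (of_int c / of_int d))"
proof -
  define \<sigma> where "\<sigma> = a * d - b * c"
  have "\<sigma> = 1 \<or> \<sigma> = -1" using assms(3)
    by (auto simp: \<sigma>_def abs_if split: if_splits)
  then have "\<sigma> * \<sigma> = 1" by auto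
  then have "(\<sigma> * d) * a + (- \<sigma> * c) * b = 1" "(- \<sigma> * b) * c + (\<sigma> * a) * d = 1"
    by (simp_all add: \<sigma>_def algebra_simps)
  then have "coprime a b" "coprime c d" using coprime_if_lincomb_eq_1 by blast+
  then show ?thesis using assms rat_num_den_of_fraction by (simp add: farey_adj_Some_Some)
qed

lemma farey_neighbours_near:
  fixes v \<epsilon> :: rat
  assumes "\<epsilon> > 0"
  shows "\<exists>l r. l < v \<and> v < r \<and> v - l < \<epsilon> \<and> r - v < \<epsilon> \<and>
     farey_adj (Some l) (Some v) \<and> farey_adj (Some v) (Some r)"
proof -
  define a d where "a = rat_num v" "d = rat_den v"
  have "d > 0" and v: "v = of_int a / of_int d" using rat_den_pos rat_num_den_eq by (auto simp: a_d_def)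
  obtain u w where "u * a + w * d = 1"
    using bezout_int[of a d] coprime_rat_num_den[of v] by (auto simp: a_d_def)
  then have bez: "a * u - d * (- w) = 1" by (simp add: algebra_simps)
  obtain k :: nat where k: "1 / \<epsilon> + of_int \<bar>u\<bar> < of_nat k"
    using reals_Archimedean2 by blast
  have kd: "int k \<le> int k * d" using \<open>d > 0\<close> by (simp add: mult_le_cancel_left1)
  define m1 m2 where "m1 = u + int k * d" "m2 = int k * d - u"
  define l r :: rat where "l = of_int (int k * a - w) / of_int m1" "r = of_int (int k * a + w) / of_int m2"
  have big: "1 / \<epsilon> < of_int m" if "int k - \<bar>u\<bar> \<le> m" for m
  proof -
    have "of_int (int k - \<bar>u\<bar>) \<le> (of_int m :: rat)" using that
      by (simp only: of_int_le_iff)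
    then show ?thesis using k by simp
  qed
  have "int k - \<bar>u\<bar> \<le> m1" "int k - \<bar>u\<bar> \<le> m2" using kd
    by (auto simp: m1_m2_def)
  then have m: "1 / \<epsilon> < of_int m1" "1 / \<epsilon> < of_int m2" using big by blast+
  moreover have "(0::rat) < 1 / \<epsilon>" using \<open>\<epsilon> > 0\<close> by simp
  ultimately have "(0::rat) < of_int m1" "(0::rat) < of_int m2" by linarith+
  then have "m1 > 0" "m2 > 0" by simp_all
  have small: "1 / of_int (d * m) < \<epsilon>" if "1 / \<epsilon> < of_int m" for m
  proof -
    have "(0::rat) < 1 / \<epsilon>" using \<open>\<epsilon> > 0\<close> by simp
    then have "of_int m > (0::rat)" using that by linarith
    then have "1 / of_int (d * m) \<le> 1 / (of_int m :: rat)"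
      using \<open>d > 0\<close> by (intro divide_left_mono) (simp_all add: mult_le_cancel_right1)
    also have "\<dots> < \<epsilon>"
      using that \<open>\<epsilon> > 0\<close> \<open>of_int m > 0\<close> by (simp add: field_simps)
    finally show ?thesis .
  qed
  have "v - l = of_int (a * m1 - d * (int k * a - w)) / of_int (d * m1)"
    unfolding v l_r_def by (rule diff_fractions) (use \<open>d > 0\<close> \<open>m1 > 0\<close> in auto)
  moreover have "r - v = of_int ((int k * a + w) * d - m2 * a) / of_int (m2 * d)"
    unfolding v l_r_def by (rule diff_fractions) (use \<open>d > 0\<close> \<open>m2 > 0\<close> in auto)
  moreover have "a * m1 - d * (int k * a - w) = 1" "(int k * a + w) * d - m2 * a = 1"
    using bez by (simp_all add: m1_m2_def algebra_simps)
  ultimately have "v - l = 1 / of_int (d * m1)" "r - v = 1 / of_int (d * m2)"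
    by (simp_all only: of_int_1 mult.commute)
  moreover have "farey_adj (Some l) (Some v)"
    unfolding v l_r_def by (rule farey_adj_fractions) (use bez \<open>d > 0\<close> \<open>m1 > 0\<close> in \<open>auto simp: m1_m2_def algebra_simps\<close>)
  moreover have "farey_adj (Some v) (Some r)"
    unfolding v l_r_def by (rule farey_adj_fractions) (use bez \<open>d > 0\<close> \<open>m2 > 0\<close> in \<open>auto simp: m1_m2_def algebra_simps\<close>)
  ultimately show ?thesis
    using small[OF m(1)] small[OF m(2)] \<open>d > 0\<close> \<open>m1 > 0\<close> \<open>m2 > 0\<close>
    by (intro exI[of _ l] exI[of _ r]) (auto simp: algebra_simps)
qed

lemma finite_bounded_fractions: "finite {z :: rat. \<bar>rat_num z\<bar> \<le> N \<and> rat_den z \<le> D}"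
proof (rule finite_subset)
  show "{z. \<bar>rat_num z\<bar> \<le> N \<and> rat_den z \<le> D} \<subseteq> (\<lambda>(a, b). of_int a / of_int b) ` ({-N..N} \<times> {1..D})"
  proof
    fix z :: rat assume "z \<in> {z. \<bar>rat_num z\<bar> \<le> N \<and> rat_den z \<le> D}"
    then have "(rat_num z, rat_den z) \<in> {-N..N} \<times> {1..D}" using rat_den_pos[of z] by auto
    then show "z \<in> (\<lambda>(a, b). of_int a / of_int b) ` ({-N..N} \<times> {1..D})"
      using rat_num_den_eq[of z] by force
  qed
qed simp

lemma finite_farey_neighbours_outside:
  assumes "l < v" "v < r"
  shows "finite {y. farey_adj (Some v) y \<and> (\<forall>z. y = Some z \<longrightarrow> z \<le> l \<or> r \<le> z)}"
proof -
  define \<delta> where "\<delta> = min (v - l) (r - v)"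
  define D where "D = \<lfloor>1 / \<delta>\<rfloor>"
  have "\<delta> > 0" using assms by (simp add: \<delta>_def)
  have bound: "\<bar>rat_num z\<bar> \<le> \<bar>rat_num v\<bar> * D + 1 \<and> rat_den z \<le> D"
    if adj: "farey_adj (Some v) (Some z)" and far: "z \<le> l \<or> r \<le> z" for z
  proof -
    have dv: "rat_den v \<ge> 1" and dz: "rat_den z \<ge> 1" using rat_den_pos
      by (auto simp: int_one_le_iff_zero_less)
    have "\<delta> \<le> \<bar>v - z\<bar>" using far assms by (auto simp: \<delta>_def)
    then have "\<delta> * of_int (rat_den v * rat_den z) \<le> 1"
      using farey_adj_abs_diff[OF adj] dv dz by (simp add: le_divide_eq)
    then have "of_int (rat_den v * rat_den z) \<le> 1 / \<delta>"
      using \<open>\<delta> > 0\<close> by (simp add: le_divide_eq mult.commute)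
    then have "rat_den v * rat_den z \<le> D" unfolding D_def by (simp add: le_floor_iff)
    moreover have "rat_den z \<le> rat_den v * rat_den z" using dv dz by simp
    ultimately have den: "rat_den z \<le> D" by linarith
    have "\<bar>rat_num v * rat_den z - rat_den v * rat_num z\<bar> = 1"
      using adj by (simp add: farey_adj_Some_Some)
    moreover have "\<bar>rat_num z\<bar> \<le> \<bar>rat_den v * rat_num z\<bar>"
      using dv by (simp add: abs_mult mult_le_cancel_right1)
    moreover have "\<bar>rat_num v * rat_den z\<bar> \<le> \<bar>rat_num v\<bar> * D"
      using den dz by (simp add: abs_mult mult_left_mono)
    ultimately show ?thesis using den by linarith
  qed
  have "{y. farey_adj (Some v) y \<and> (\<forall>z. y = Some z \<longrightarrow> z \<le> l \<or> r \<le> z)}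
      \<subseteq> insert None (Some ` {z. \<bar>rat_num z\<bar> \<le> \<bar>rat_num v\<bar> * D + 1 \<and> rat_den z \<le> D})"
    (is "_ \<subseteq> insert None (Some ` ?Z)")
  proof
    fix y assume "y \<in> {y. farey_adj (Some v) y \<and> (\<forall>z. y = Some z \<longrightarrow> z \<le> l \<or> r \<le> z)}"
    with bound show "y \<in> insert None (Some ` ?Z)" by (cases y) auto
  qed
  then show ?thesis using finite_bounded_fractions finite_subset by blast
qed

lemma farey_parent:
  assumes "rat_den q \<ge> 2"
  shows "\<exists>q'. rat_den q' < rat_den q \<and> farey_adj (Some q') (Some q)"
proof -
  define a d where "a = rat_num q" "d = rat_den q"
  have q: "q = of_int a / of_int d" using rat_num_den_eq by (simp add: a_d_def)
  obtain u w where "u * a + w * d = 1"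
    using bezout_int[of a d] coprime_rat_num_den[of q] by (auto simp: a_d_def)
  then have bez: "a * (u mod d) - d * (- w - (u div d) * a) = 1"
    by (simp add: algebra_simps) (metis add.commute div_mult_mod_eq distrib_left mult.commute mult.left_commute)
  define a' b' where "a' = - w - (u div d) * a" "b' = u mod d"
  have "d \<ge> 2" using assms by (simp add: a_d_def)
  have "b' \<noteq> 0"
  proof
    assume "b' = 0"
    then have "d dvd 1" using bez
      by (metis a'_b'_def(1,2) diff_0 dvd_minus_iff dvd_triv_left mult_zero_right)
    then show False using \<open>d \<ge> 2\<close> by simp
  qed
  moreover have "0 \<le> b'" "b' < d" using \<open>d \<ge> 2\<close> by (simp_all add: a'_b'_def)
  ultimately have "0 < b'" by simp
  have "coprime a' b'" using bez coprime_if_lincomb_eq_1[of "-d" a' a b']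
    by (simp add: a'_b'_def algebra_simps)
  then have "rat_den (of_int a' / of_int b') = b'"
    using rat_num_den_of_fraction \<open>0 < b'\<close> by blast
  moreover have "farey_adj (Some (of_int a' / of_int b')) (Some q)"
    unfolding q using bez \<open>0 < b'\<close> \<open>d \<ge> 2\<close>
      by (intro farey_adj_fractions) (auto simp: a'_b'_def algebra_simps)
  ultimately show ?thesis using \<open>b' < d\<close>
    by (auto simp: a_d_def intro!: exI[of _ "of_int a' / of_int b'"])
qed

lemma farey_rtranclp_None: "farey_adj\<^sup>*\<^sup>* None (Some q)"
proof (induction "nat (rat_den q)" arbitrary: q rule: less_induct)
  case less
  show ?case
  proof (cases "rat_den q = 1")
    case True
    then show ?thesis by (simp add: farey_adj_None_Some r_into_rtranclp)
  next
    case False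
    then have "rat_den q \<ge> 2" using rat_den_pos[of q] by linarith
    then obtain q' where "rat_den q' < rat_den q" "farey_adj (Some q') (Some q)"
      using farey_parent by blast
    then show ?thesis using less rat_den_pos[of q']
      by (meson nat_less_eq_zless less_imp_le rtranclp.rtrancl_into_rtrancl)
  qed
qed

section \<open>Edge-disjoint detours in the Farey graph\<close>

definition consecutive_pairs :: "'a list \<Rightarrow> ('a \<times> 'a) set" where
  "consecutive_pairs xs = set (zip xs (tl xs))"

lemma successively_iff_consecutive_pairs:
  "successively P xs \<longleftrightarrow> (\<forall>(a, b) \<in> consecutive_pairs xs. P a b)"
  unfolding consecutive_pairs_def
proof (induction xs)
  case (Cons x xs)
  then show ?case by (cases xs) auto
qed simp

lemma consecutive_pairs_in_set: "(a, b) \<in> consecutive_pairs xs \<Longrightarrow> a \<in> set xs \<and> b \<in> set xs"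
  unfolding consecutive_pairs_def by (metis in_set_zipE list.set_sel(2) tl_Nil)

definition mediant :: "nat \<times> nat \<Rightarrow> nat \<times> nat \<Rightarrow> nat \<times> nat" where
  "mediant A B = (fst A + fst B, snd A + snd B)"

fun mediant_refine :: "(nat \<times> nat) list \<Rightarrow> (nat \<times> nat) list" where
  "mediant_refine (A # B # rest) = A # mediant A B # mediant_refine (B # rest)"
| "mediant_refine xs = xs"

text \<open>A pair \<open>(m, n)\<close> stands for the vector \<open>m X + n Y\<close>, where \<open>X, Y\<close> are the vectors of the
  two ends of a Farey edge (see \<open>lin_comb\<close> below); row \<open>k\<close> then becomes a walk between these ends,
  and different rows use disjoint sets of edges.\<close>

definition sb_adj :: "nat \<times> nat \<Rightarrow> nat \<times> nat \<Rightarrow> bool" where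
  "sb_adj A B \<longleftrightarrow> int (snd A) * int (fst B) - int (fst A) * int (snd B) = 1"

definition sb_val :: "nat \<times> nat \<Rightarrow> rat" where
  "sb_val A = of_nat (fst A) / of_nat (fst A + snd A)"

definition sb_row :: "nat \<Rightarrow> (nat \<times> nat) list" where
  "sb_row k = (mediant_refine ^^ k) [(0, 1), (1, 0)]"

lemma sb_adj_mediant: "sb_adj A B \<Longrightarrow> sb_adj A (mediant A B) \<and> sb_adj (mediant A B) B"
  by (simp add: sb_adj_def mediant_def algebra_simps)

lemma sb_adj_val_less: "sb_adj A B \<Longrightarrow> sb_val A < sb_val B"
proof -
  assume adj: "sb_adj A B"
  obtain m n m' n' where AB: "A = (m, n)" "B = (m', n')" by (cases A, cases B)
  have e: "int n * int m' - int m * int n' = 1" using adj by (simp add: sb_adj_def AB)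
  have "m + n \<noteq> 0"
  proof
    assume "m + n = 0"
    then show False using e by simp
  qed
  have "m' + n' \<noteq> 0"
  proof
    assume "m' + n' = 0"
    then show False using e by simp
  qed
  have "int m * int n' < int m' * int n" using e by (simp add: mult.commute)
  then have "m * (m' + n') < m' * (m + n)" by (simp add: algebra_simps flip: of_nat_mult)
  then have "(of_nat m :: rat) * of_nat (m' + n') < of_nat m' * of_nat (m + n)"
    by (metis of_nat_less_iff of_nat_mult)
  moreover have "(0::rat) < of_nat (m + n)" "(0::rat) < of_nat (m' + n')"
    using \<open>m + n \<noteq> 0\<close> \<open>m' + n' \<noteq> 0\<close> by (simp_all del: of_nat_add)
  moreover have "a / b < c / d" if "(b::rat) > 0" "d > 0" "a * d < c * b" for a b c d
    using that by (simp add: field_simps)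
  ultimately show ?thesis by (simp add: sb_val_def AB del: of_nat_add)
qed

lemma mediant_refine_successively: "successively sb_adj xs \<Longrightarrow> successively sb_adj (mediant_refine xs)"
proof (induction xs rule: mediant_refine.induct)
  case (1 A B rest)
  then have "sb_adj A B" "successively sb_adj (mediant_refine (B # rest))" by auto
  moreover have "hd (mediant_refine (B # rest)) = B" "mediant_refine (B # rest) \<noteq> []"
    by (cases rest; simp)+
  ultimately show ?case using sb_adj_mediant[of A B] by (simp add: successively_Cons)
qed auto

lemma mediant_refine_hd_last:
  "xs \<noteq> [] \<Longrightarrow> mediant_refine xs \<noteq> [] \<and> hd (mediant_refine xs) = hd xs \<and> last (mediant_refine xs) = last xs"
proof (induction xs rule: mediant_refine.induct)
  case (1 A B rest)
  then show ?case by (cases rest) auto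
qed auto

lemma set_mediant_refine: "set xs \<subseteq> set (mediant_refine xs)"
  by (induction xs rule: mediant_refine.induct) auto

lemma mediant_in_mediant_refine: "(A, B) \<in> consecutive_pairs xs \<Longrightarrow> mediant A B \<in> set (mediant_refine xs)"
  unfolding consecutive_pairs_def
  by (induction xs rule: mediant_refine.induct) (auto simp: neq_Nil_conv)

lemma length_mediant_refine: "length (mediant_refine xs) \<ge> length xs"
  by (induction xs rule: mediant_refine.induct) auto

lemma sb_row_Suc: "sb_row (Suc k) = mediant_refine (sb_row k)"
  by (simp add: sb_row_def)

lemma sb_row_basic:
  "successively sb_adj (sb_row k) \<and> length (sb_row k) \<ge> 2 \<and> hd (sb_row k) = (0, 1) \<and> last (sb_row k) = (1, 0)"
proof (induction k)
  case 0
  then show ?case by (simp add: sb_row_def sb_adj_def)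
next
  case (Suc k)
  then have "sb_row k \<noteq> []" by auto
  then show ?case using Suc mediant_refine_hd_last length_mediant_refine[of "sb_row k"]
    by (auto simp: sb_row_Suc mediant_refine_successively)
qed

lemma sb_row_mono: "j \<le> k \<Longrightarrow> set (sb_row j) \<subseteq> set (sb_row k)"
  by (induction k) (auto simp: le_Suc_eq sb_row_Suc dest: subsetD[OF set_mediant_refine])

lemma sb_row_sorted: "sorted_wrt (\<lambda>A B. sb_val A < sb_val B) (sb_row k)"
proof -
  have "successively (\<lambda>A B. sb_val A < sb_val B) (sb_row k)"
    using sb_row_basic[of k] by (auto elim: successively_mono intro: sb_adj_val_less)
  then show ?thesis by (simp add: successively_conv_sorted_wrt transp_def)
qed

lemma sorted_consecutive_pairs_nothing_between:
  fixes f :: "'a \<Rightarrow> 'b :: order"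
  assumes "sorted_wrt (\<lambda>A B. f A < f B) xs" "(A, B) \<in> consecutive_pairs xs" "C \<in> set xs"
  shows "\<not> (f A < f C \<and> f C < f B)"
  using assms unfolding consecutive_pairs_def
proof (induction xs)
  case (Cons x xs)
  show ?case
  proof (cases "(A, B) \<in> set (zip xs (tl xs))")
    case True
    then have "A \<in> set xs" by (meson in_set_zipE)
    then have "f x < f A" using Cons.prems(1) by simp
    then show ?thesis using Cons True order.asym[OF \<open>f x < f A\<close>] by auto
  next
    case False
    then obtain ys where "xs = B # ys" "A = x" using Cons.prems(2) by (cases xs) auto
    then show ?thesis using Cons.prems(1,3) by auto
  qed
qed simp

lemma sb_row_pair_unique:
  assumes "(A, B) \<in> consecutive_pairs (sb_row j)" "(A, B) \<in> consecutive_pairs (sb_row k)"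
  shows "j = k"
proof -
  have mediant_between: False if "(A, B) \<in> consecutive_pairs (sb_row i)" "(A, B) \<in> consecutive_pairs (sb_row i')"
    "i < i'" for i i'
  proof -
    have adj: "sb_adj A B" using sb_row_basic[of i] that(1)
      by (auto simp: successively_iff_consecutive_pairs)
    have "mediant A B \<in> set (sb_row (Suc i))" using mediant_in_mediant_refine[OF that(1)]
      by (simp add: sb_row_Suc)
    then have "mediant A B \<in> set (sb_row i')" using sb_row_mono[of "Suc i" i'] that(3) by auto
    then show False using sorted_consecutive_pairs_nothing_between[OF sb_row_sorted that(2)]
      sb_adj_mediant[OF adj] sb_adj_val_less by blast
  qed
  show ?thesis using mediant_between[OF assms] mediant_between[OF assms(2,1)]
    by (metis linorder_neqE_nat)
qed

lemma sb_row_has_sb_neighbour: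
  assumes "A \<in> set (sb_row k)"
  shows "\<exists>B. sb_adj A B \<or> sb_adj B A"
proof -
  have "\<exists>B. sb_adj A B \<or> sb_adj B A" if "successively sb_adj xs" "length xs \<ge> 2" "A \<in> set xs" for xs
    using that
  proof (induction xs rule: induct_list012)
    case (3 x y zs)
    show ?case
    proof (cases "A = x \<or> A = y")
      case True
      moreover have "sb_adj x y" using "3.prems"(1) by simp
      ultimately show ?thesis by blast
    next
      case False
      then have "A \<in> set zs" using "3.prems" by simp
      then have "length (y # zs) \<ge> 2" by (cases zs) auto
      then show ?thesis using "3.IH"(2) "3.prems" False by auto
    qed
  qed auto
  then show ?thesis using sb_row_basic[of k] assms by blast
qed

text \<open>Farey vertices are the primitive integer vectors up to sign; \<open>normal_vec\<close> singles out the
  representative \<^const>\<open>farey_frac\<close>.\<close>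

definition vec_farey :: "int \<times> int \<Rightarrow> rat option" where
  "vec_farey P = (if snd P = 0 then None else Some (of_int (fst P) / of_int (snd P)))"

definition normal_vec :: "int \<times> int \<Rightarrow> bool" where
  "normal_vec P \<longleftrightarrow> snd P \<ge> 0 \<and> coprime (fst P) (snd P) \<and> (snd P = 0 \<longrightarrow> fst P = 1)"

lemma normal_vec_farey_frac: "normal_vec (farey_frac x)"
proof (cases x)
  case (Some q)
  then show ?thesis
    using coprime_rat_num_den[of q] rat_den_pos[of q] by (simp add: normal_vec_def farey_frac_Some)
qed (simp add: normal_vec_def farey_frac_def)

lemma vec_farey_farey_frac: "vec_farey (farey_frac x) = x"
  using rat_den_pos rat_num_den_eq
  by (cases x) (auto simp: vec_farey_def farey_frac_Some less_imp_neq[symmetric], simp add: farey_frac_def)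

lemma farey_frac_vec_farey: "normal_vec P \<Longrightarrow> farey_frac (vec_farey P) = P"
  using rat_num_den_of_fraction[of "snd P" "fst P"]
  by (cases P) (auto simp: normal_vec_def vec_farey_def farey_frac_Some, simp_all add: farey_frac_def)

lemma farey_adj_vec_farey:
  "normal_vec P \<Longrightarrow> normal_vec Q \<Longrightarrow> farey_adj (vec_farey P) (vec_farey Q) \<longleftrightarrow> \<bar>det2 P Q\<bar> = 1"
  by (simp add: farey_adj_iff_det2 farey_frac_vec_farey)

lemma vec_farey_inj: "normal_vec P \<Longrightarrow> normal_vec Q \<Longrightarrow> vec_farey P = vec_farey Q \<Longrightarrow> P = Q"
  by (metis farey_frac_vec_farey)

lemma coprime_if_det2:
  assumes "\<bar>det2 P Q\<bar> = 1"
  shows "coprime (fst P) (snd P)" "coprime (fst Q) (snd Q)"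
proof -
  define \<sigma> where "\<sigma> = det2 P Q"
  have "\<sigma> * \<sigma> = 1" using assms by (auto simp: \<sigma>_def abs_if split: if_splits)
  then have "(\<sigma> * snd Q) * fst P + (- \<sigma> * fst Q) * snd P = 1" "(- \<sigma> * snd P) * fst Q + (\<sigma> * fst P) * snd Q = 1"
    by (simp_all add: \<sigma>_def det2_def algebra_simps)
  then show "coprime (fst P) (snd P)" "coprime (fst Q) (snd Q)" using coprime_if_lincomb_eq_1 by blast+
qed

definition lin_comb :: "int \<times> int \<Rightarrow> int \<times> int \<Rightarrow> nat \<times> nat \<Rightarrow> int \<times> int" where
  "lin_comb X Y A = (int (fst A) * fst X + int (snd A) * fst Y, int (fst A) * snd X + int (snd A) * snd Y)"

lemma det2_lin_comb_sb_adj: "sb_adj A B \<Longrightarrow> det2 (lin_comb X Y A) (lin_comb X Y B) = - det2 X Y"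
proof -
  assume "sb_adj A B"
  moreover have "det2 (lin_comb X Y A) (lin_comb X Y B) =
    (int (fst A) * int (snd B) - int (snd A) * int (fst B)) * det2 X Y"
    by (simp add: det2_def lin_comb_def algebra_simps)
  ultimately show ?thesis by (simp add: sb_adj_def algebra_simps)
qed

lemma lin_comb_inj:
  assumes "det2 X Y \<noteq> 0" "lin_comb X Y A = lin_comb X Y B"
  shows "A = B"
proof -
  define s t where "s = int (fst A) - int (fst B)" "t = int (snd A) - int (snd B)"
  have "s * fst X + t * fst Y = 0" "s * snd X + t * snd Y = 0"
    using assms(2) by (simp_all add: lin_comb_def s_t_def algebra_simps)
  moreover have "s * det2 X Y = snd Y * (s * fst X + t * fst Y) - fst Y * (s * snd X + t * snd Y)"
    "t * det2 X Y = fst X * (s * snd X + t * snd Y) - snd X * (s * fst X + t * fst Y)"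
    by (simp_all add: det2_def algebra_simps)
  ultimately have "s * det2 X Y = 0" "t * det2 X Y = 0" by simp_all
  then show ?thesis using assms(1) by (simp add: s_t_def prod_eq_iff)
qed

lemma normal_vec_lin_comb:
  assumes X: "normal_vec X" and Y: "normal_vec Y" and det: "\<bar>det2 X Y\<bar> = 1"
    and cop: "coprime (fst (lin_comb X Y A)) (snd (lin_comb X Y A))"
  shows "normal_vec (lin_comb X Y A)"
proof -
  obtain m n where A: "A = (m, n)" by (cases A)
  obtain a b c d where XY: "X = (a, b)" "Y = (c, d)" by (cases X, cases Y)
  have nonneg: "b \<ge> 0" "d \<ge> 0" and horiz: "b = 0 \<longrightarrow> a = 1" "d = 0 \<longrightarrow> c = 1"
    using X Y by (auto simp: normal_vec_def XY)
  have "\<bar>a * d - b * c\<bar> = 1" using det by (simp add: det2_def XY)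
  have "fst (lin_comb X Y A) = 1" if "snd (lin_comb X Y A) = 0"
  proof -
    have "int m * b = 0" "int n * d = 0"
      using that nonneg by (simp_all add: lin_comb_def A XY add_nonneg_eq_0_iff)
    then consider "b = 0" "n = 0" | "d = 0" "m = 0" | "m = 0" "n = 0"
      using \<open>\<bar>a * d - b * c\<bar> = 1\<close> by auto
    then show ?thesis using cop horiz by cases (auto simp: lin_comb_def A XY)
  qed
  then show ?thesis using cop nonneg by (simp add: normal_vec_def lin_comb_def A XY)
qed

context
  fixes X Y :: "int \<times> int"
  assumes X: "normal_vec X" and Y: "normal_vec Y" and det: "\<bar>det2 X Y\<bar> = 1"
begin

lemma normal_vec_lin_comb_sb_row:
  assumes "A \<in> set (sb_row k)"
  shows "normal_vec (lin_comb X Y A)"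
proof -
  obtain B where "sb_adj A B \<or> sb_adj B A" using sb_row_has_sb_neighbour[OF assms] by blast
  then have "coprime (fst (lin_comb X Y A)) (snd (lin_comb X Y A))"
  proof
    assume "sb_adj A B"
    then have "\<bar>det2 (lin_comb X Y A) (lin_comb X Y B)\<bar> = 1"
      using det2_lin_comb_sb_adj det by simp
    then show ?thesis by (rule coprime_if_det2(1))
  next
    assume "sb_adj B A"
    then have "\<bar>det2 (lin_comb X Y B) (lin_comb X Y A)\<bar> = 1"
      using det2_lin_comb_sb_adj det by simp
    then show ?thesis by (rule coprime_if_det2(2))
  qed
  then show ?thesis using normal_vec_lin_comb[OF X Y det] by blast
qed

lemma farey_adj_sb_row_pair:
  assumes "(A, B) \<in> consecutive_pairs (sb_row k)"
  shows "farey_adj (vec_farey (lin_comb X Y A)) (vec_farey (lin_comb X Y B))"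
proof -
  have "sb_adj A B" using sb_row_basic[of k] assms by (auto simp: successively_iff_consecutive_pairs)
  then have "\<bar>det2 (lin_comb X Y A) (lin_comb X Y B)\<bar> = 1" using det2_lin_comb_sb_adj det
    by simp
  moreover have "normal_vec (lin_comb X Y A)" "normal_vec (lin_comb X Y B)"
    using consecutive_pairs_in_set[OF assms] normal_vec_lin_comb_sb_row by blast+
  ultimately show ?thesis by (simp add: farey_adj_vec_farey)
qed

lemma vec_farey_lin_comb_inj:
  assumes "A \<in> set (sb_row j)" "B \<in> set (sb_row k)"
    and "vec_farey (lin_comb X Y A) = vec_farey (lin_comb X Y B)"
  shows "A = B"
  using assms det normal_vec_lin_comb_sb_row lin_comb_inj vec_farey_inj by (metis zero_neq_one abs_zero)

lemma sb_row_edges_disjoint: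
  assumes "(A, B) \<in> consecutive_pairs (sb_row j)" "(A', B') \<in> consecutive_pairs (sb_row k)"
    and "{vec_farey (lin_comb X Y A), vec_farey (lin_comb X Y B)} =
      {vec_farey (lin_comb X Y A'), vec_farey (lin_comb X Y B')}"
  shows "j = k"
proof -
  have inj: "C = D" if "C \<in> set (sb_row i)" "D \<in> set (sb_row i')"
    "vec_farey (lin_comb X Y C) = vec_farey (lin_comb X Y D)" for C D i i'
    using vec_farey_lin_comb_inj that by blast
  have "A \<in> set (sb_row j)" "B \<in> set (sb_row j)" "A' \<in> set (sb_row k)" "B' \<in> set (sb_row k)"
    using consecutive_pairs_in_set[OF assms(1)] consecutive_pairs_in_set[OF assms(2)] by auto
  with assms(3) consider "A = A'" "B = B'" | "A = B'" "B = A'"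
    using inj[of A j A' k] inj[of B j B' k] inj[of A j B' k] inj[of B j A' k]
    by (auto simp: doubleton_eq_iff)
  then show ?thesis
  proof cases
    case 1
    then show ?thesis using assms sb_row_pair_unique by simp
  next
    case 2
    have "sb_adj A B" "sb_adj A' B'"
      using sb_row_basic assms(1,2) by (auto simp: successively_iff_consecutive_pairs)
    then show ?thesis using 2 sb_adj_val_less by (metis less_asym)
  qed
qed

end

lemma farey_detour:
  assumes adj: "farey_adj x y" and fin: "finite F"
  shows "\<exists>p. p \<noteq> [] \<and> hd p = x \<and> last p = y \<and> successively (\<lambda>u v. farey_adj u v \<and> {u, v} \<notin> F) p"
proof -
  define X Y where "X = farey_frac y" "Y = farey_frac x"
  have XY: "normal_vec X" "normal_vec Y" "\<bar>det2 X Y\<bar> = 1"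
    using farey_adj_sym[OF adj] normal_vec_farey_frac by (auto simp: X_Y_def farey_adj_iff_det2)
  define t where "t A = vec_farey (lin_comb X Y A)" for A
  define edges where "edges k = {{t A, t B} | A B. (A, B) \<in> consecutive_pairs (sb_row k)}" for k
  have "finite {k. e \<in> edges k}" for e
  proof (cases "\<exists>k0. e \<in> edges k0")
    case True
    then obtain k0 where "e \<in> edges k0" by blast
    then have "{k. e \<in> edges k} \<subseteq> {k0}"
      using sb_row_edges_disjoint[OF XY] unfolding edges_def t_def by blast
    then show ?thesis by (rule finite_subset) simp
  qed simp
  moreover have "{k. edges k \<inter> F \<noteq> {}} = (\<Union>e\<in>F. {k. e \<in> edges k})" by auto
  ultimately have "finite {k. edges k \<inter> F \<noteq> {}}" using fin by simp
  then obtain k where k: "edges k \<inter> F = {}" using infinite_UNIV_nat ex_new_if_finite by blast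
  have "successively (\<lambda>A B. farey_adj (t A) (t B) \<and> {t A, t B} \<notin> F) (sb_row k)"
    using farey_adj_sb_row_pair[OF XY] k
    unfolding successively_iff_consecutive_pairs t_def edges_def by blast
  moreover have "sb_row k \<noteq> []" using sb_row_basic[of k] by auto
  then have "hd (map t (sb_row k)) = x" "last (map t (sb_row k)) = y"
    using sb_row_basic[of k]
      by (simp_all add: hd_map last_map t_def lin_comb_def X_Y_def vec_farey_farey_frac)
  ultimately show ?thesis using sb_row_basic[of k]
    by (intro exI[of _ "map t (sb_row k)"]) (auto simp: successively_map)
qed

section \<open>Walks and connectivity\<close>

definition edge_in :: "'v set \<Rightarrow> ('v \<Rightarrow> 'v \<Rightarrow> bool) \<Rightarrow> 'v \<Rightarrow> 'v \<Rightarrow> bool" where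
  "edge_in S E a b \<longleftrightarrow> E a b \<and> a \<in> S \<and> b \<in> S"

lemma walk_in_iff_successively: "walk_in S E p \<longleftrightarrow> p \<noteq> [] \<and> set p \<subseteq> S \<and> successively E p"
  by (simp add: walk_in_def successively_conv_nth)

lemma successively_imp_rtranclp: "successively R p \<Longrightarrow> p \<noteq> [] \<Longrightarrow> R\<^sup>*\<^sup>* (hd p) (last p)"
  by (induction p rule: induct_list012) (auto intro: converse_rtranclp_into_rtranclp)

lemma rtranclp_imp_walk_in:
  assumes "(edge_in S E)\<^sup>*\<^sup>* a b" "a \<in> S"
  shows "\<exists>p. walk_in S E p \<and> hd p = a \<and> last p = b"
  using assms(1)
proof (induction rule: rtranclp_induct)
  case base
  then show ?case using assms(2) by (intro exI[of _ "[a]"]) (simp add: walk_in_iff_successively)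
next
  case (step y z)
  then obtain p where "walk_in S E p" "hd p = a" "last p = y" by blast
  with step(2) show ?case
    by (intro exI[of _ "p @ [z]"]) (auto simp: walk_in_iff_successively successively_append_iff edge_in_def)
qed

lemma connected_on_iff_rtranclp: "connected_on S E \<longleftrightarrow> (\<forall>u\<in>S. \<forall>v\<in>S. (edge_in S E)\<^sup>*\<^sup>* u v)"
proof -
  have "(edge_in S E)\<^sup>*\<^sup>* (hd p) (last p)" if "walk_in S E p" for p
  proof -
    have "successively (edge_in S E) p"
      using that by (auto simp: walk_in_iff_successively edge_in_def elim!: successively_mono)
    then show ?thesis using that successively_imp_rtranclp by (auto simp: walk_in_iff_successively)
  qed
  then show ?thesis unfolding connected_on_def using rtranclp_imp_walk_in by metis
qed

lemma edge_in_mono: "S \<subseteq> S' \<Longrightarrow> (edge_in S E)\<^sup>*\<^sup>* a b \<Longrightarrow> (edge_in S' E)\<^sup>*\<^sup>* a b"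
  by (rule rtranclp_mono[THEN predicate2D, rotated]) (auto simp: edge_in_def)

lemma connected_on_singleton: "connected_on {x} E"
  by (simp add: connected_on_iff_rtranclp)

lemma connected_on_Un:
  assumes "connected_on A E" "connected_on B E" "y \<in> A" "y \<in> B"
  shows "connected_on (A \<union> B) E"
proof -
  have "(edge_in (A \<union> B) E)\<^sup>*\<^sup>* a b" if "a \<in> C" "b \<in> C" "C \<in> {A, B}" for a b C
    using assms that edge_in_mono[of C "A \<union> B"] unfolding connected_on_iff_rtranclp by blast
  then show ?thesis unfolding connected_on_iff_rtranclp using assms(3,4) by (blast intro: rtranclp_trans)
qed

lemma connected_on_walk: "symp E \<Longrightarrow> successively E p \<Longrightarrow> p \<noteq> [] \<Longrightarrow> connected_on (set p) E"
proof (induction p rule: induct_list012)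
  case (3 x y zs)
  have "E x y" "E y x" using "3.prems" by (auto dest: sympD)
  then have "connected_on {x, y} E" by (auto simp: connected_on_iff_rtranclp edge_in_def)
  moreover have "connected_on (set (y # zs)) E" using 3 by simp
  moreover have "y \<in> {x, y}" "y \<in> set (y # zs)" by simp_all
  ultimately have "connected_on ({x, y} \<union> set (y # zs)) E" by (rule connected_on_Un)
  moreover have "{x, y} \<union> set (y # zs) = set (x # y # zs)" by auto
  ultimately show ?case by simp
qed (auto simp: connected_on_singleton)

lemma connected_on_finite_subset:
  assumes "symp E" "connected_on A E" "finite X" "X \<noteq> {}" "X \<subseteq> A"
  shows "\<exists>A'. finite A' \<and> X \<subseteq> A' \<and> A' \<subseteq> A \<and> connected_on A' E"
  using assms(3-5)
proof (induction rule: finite_ne_induct)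
  case (singleton x)
  then show ?case by (intro exI[of _ "{x}"]) (simp add: connected_on_singleton)
next
  case (insert x F)
  then obtain A' where A': "finite A'" "F \<subseteq> A'" "A' \<subseteq> A" "connected_on A' E" by auto
  obtain y where "y \<in> F" using insert(2) by blast
  have "y \<in> A" "x \<in> A" using \<open>y \<in> F\<close> insert.prems by auto
  then have "(edge_in A E)\<^sup>*\<^sup>* y x" using assms(2) by (simp add: connected_on_iff_rtranclp)
  from rtranclp_imp_walk_in[OF this \<open>y \<in> A\<close>]
  obtain p where p: "walk_in A E p" "hd p = y" "last p = x" by blast
  then have "p \<noteq> []" "set p \<subseteq> A" "successively E p"
    by (simp_all add: walk_in_iff_successively)
  then have "connected_on (set p) E" "y \<in> set p" "x \<in> set p"
    using connected_on_walk[OF assms(1)] p(2,3) hd_in_set last_in_set by blast+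
  then have "connected_on (A' \<union> set p) E"
    using connected_on_Un[OF A'(4), of "set p" y] A'(2) \<open>y \<in> F\<close> by blast
  then show ?case using A' \<open>set p \<subseteq> A\<close> \<open>x \<in> set p\<close>
    by (intro exI[of _ "A' \<union> set p"]) auto
qed

section \<open>\<open>K\<^sub>4\<close> minors\<close>

definition complete_model :: "'h set \<Rightarrow> 'v set \<Rightarrow> ('v \<Rightarrow> 'v \<Rightarrow> bool) \<Rightarrow> ('h \<Rightarrow> 'v set) \<Rightarrow> bool" where
  "complete_model K S E B \<longleftrightarrow>
     (\<forall>h\<in>K. B h \<noteq> {} \<and> B h \<subseteq> S \<and> connected_on (B h) E) \<and>
     (\<forall>h\<in>K. \<forall>h'\<in>K. h \<noteq> h' \<longrightarrow> B h \<inter> B h' = {} \<and> (\<exists>x\<in>B h. \<exists>y\<in>B h'. E x y))"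

lemma is_minor_complete_iff: "is_minor K (\<noteq>) S E \<longleftrightarrow> (\<exists>B. complete_model K S E B)"
  by (simp add: is_minor_def complete_model_def imp_conjR ball_conj_distrib)

lemma is_minor_complete_if_clique:
  assumes "is_minor VH EH VG EG" "K \<subseteq> VH" "\<And>h h'. h \<in> K \<Longrightarrow> h' \<in> K \<Longrightarrow> h \<noteq> h' \<Longrightarrow> EH h h'"
  shows "is_minor K (\<noteq>) VG EG"
proof -
  obtain B where "\<forall>h\<in>VH. B h \<noteq> {} \<and> B h \<subseteq> VG \<and> connected_on (B h) EG"
    "\<forall>h\<in>VH. \<forall>h'\<in>VH. h \<noteq> h' \<longrightarrow> B h \<inter> B h' = {}"
    "\<forall>h\<in>VH. \<forall>h'\<in>VH. EH h h' \<longrightarrow> (\<exists>x\<in>B h. \<exists>y\<in>B h'. EG x y)"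
    using assms(1) unfolding is_minor_def by blast
  with assms(2,3) show ?thesis unfolding is_minor_def by (intro exI[of _ B]) blast
qed

definition small_simplicial :: "('v \<Rightarrow> 'v \<Rightarrow> bool) \<Rightarrow> 'v set \<Rightarrow> 'v \<Rightarrow> bool" where
  "small_simplicial E S v \<longleftrightarrow> v \<in> S \<and>
     (\<forall>x\<in>S. \<forall>y\<in>S. E v x \<longrightarrow> E v y \<longrightarrow> x \<noteq> y \<longrightarrow> E x y) \<and>
     (\<forall>x\<in>S. \<forall>y\<in>S. \<forall>z\<in>S. E v x \<longrightarrow> E v y \<longrightarrow> E v z \<longrightarrow> x = y \<or> y = z \<or> x = z)"

lemma connected_on_Diff_simplicial:
  assumes "symp E" "connected_on A E" "v \<in> A" "x0 \<in> A" "x0 \<noteq> v"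
    and clique: "\<And>x y. x \<in> A \<Longrightarrow> y \<in> A \<Longrightarrow> E v x \<Longrightarrow> E v y \<Longrightarrow> x \<noteq> y \<Longrightarrow> E x y"
  shows "connected_on (A - {v}) E" "\<exists>n\<in>A - {v}. E n v"
proof -
  define A' where "A' = A - {v}"
  text \<open>Walks through \<open>v\<close> can shortcut along the edge between its two neighbours.\<close>
  have reach: "(z \<noteq> v \<longrightarrow> (edge_in A' E)\<^sup>*\<^sup>* u z) \<and> (z = v \<longrightarrow> (\<exists>n\<in>A'. E n v \<and> (edge_in A' E)\<^sup>*\<^sup>* u n))"
    if "u \<in> A'" "(edge_in A E)\<^sup>*\<^sup>* u z" for u z
    using that(2)
  proof (induction rule: rtranclp_induct)
    case base
    then show ?case using that(1) by (auto simp: A'_def)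
  next
    case (step z z')
    then have zz': "E z z'" "z \<in> A" "z' \<in> A" by (auto simp: edge_in_def)
    show ?case
    proof (cases "z = v")
      case False
      then show ?thesis using step.IH zz'
        by (auto simp: A'_def edge_in_def intro: rtranclp.rtrancl_into_rtrancl)
    next
      case True
      then obtain n where n: "n \<in> A'" "E n v" "(edge_in A' E)\<^sup>*\<^sup>* u n" using step.IH
        by blast
      have "(edge_in A' E)\<^sup>*\<^sup>* u z'" if "z' \<noteq> v"
      proof (cases "n = z'")
        case False
        then have "E n z'" using clique[of n z'] n zz' True assms(1) by (auto simp: A'_def dest: sympD)
        then show ?thesis using n that zz'
          by (auto simp: A'_def edge_in_def intro: rtranclp.rtrancl_into_rtrancl)
      qed (use n in simp)
      then show ?thesis using n by auto
    qed
  qed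
  show "connected_on (A - {v}) E"
    using assms(2) reach by (auto simp: connected_on_iff_rtranclp A'_def)
  show "\<exists>n\<in>A - {v}. E n v"
    using assms(2-5) reach[of x0 v] by (auto simp: connected_on_iff_rtranclp A'_def)
qed

lemma card_ge_4_obtain_three_others:
  assumes "4 \<le> card K" "h \<in> K"
  obtains x y z where "x \<in> K" "y \<in> K" "z \<in> K" "distinct [h, x, y, z]"
proof -
  have "3 \<le> card (K - {h})" using assms by (simp add: card_Diff_singleton)
  then obtain T where "T \<subseteq> K - {h}" "card T = 3" by (meson obtain_subset_with_card_n)
  then show ?thesis using that by (auto simp: card_3_iff)
qed

text \<open>A branch set of a \<open>K\<^sub>4\<close> model cannot be \<open>{v}\<close> for a small simplicial vertex \<open>v\<close>:
  \<open>v\<close> would then have neighbours in three other, disjoint, branch sets.\<close>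

lemma complete_model_branch_set_other:
  assumes "4 \<le> card K" "complete_model K S E B" "small_simplicial E S v" "h \<in> K"
  shows "\<exists>x\<in>B h. x \<noteq> v"
proof (rule ccontr)
  assume "\<not> ?thesis"
  then have single: "B h \<subseteq> {v}" by blast
  obtain x y z where xyz: "x \<in> K" "y \<in> K" "z \<in> K" "distinct [h, x, y, z]"
    using card_ge_4_obtain_three_others[OF assms(1,4)] .
  have "\<exists>b\<in>B k. E v b" if "k \<in> K" "k \<noteq> h" for k
    using assms(2,4) that single by (fastforce simp: complete_model_def)
  then obtain b1 b2 b3 where b: "b1 \<in> B x" "b2 \<in> B y" "b3 \<in> B z" "E v b1" "E v b2" "E v b3"
    using xyz by (metis distinct_length_2_or_more)
  have "B k \<inter> B k' = {}" if "k \<in> K" "k' \<in> K" "k \<noteq> k'" for k k'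
    using assms(2) that by (auto simp: complete_model_def)
  moreover have "B k \<subseteq> S" if "k \<in> K" for k
    using assms(2) that by (auto simp: complete_model_def)
  ultimately have "b1 \<noteq> b2" "b2 \<noteq> b3" "b1 \<noteq> b3" "b1 \<in> S" "b2 \<in> S" "b3 \<in> S"
    using xyz b by auto
  then show False using assms(3) b unfolding small_simplicial_def by blast
qed

lemma complete_model_Diff_simplicial:
  assumes "symp E" "4 \<le> card K" and model: "complete_model K S E B" and v: "small_simplicial E S v"
  shows "complete_model K (S - {v}) E (\<lambda>h. B h - {v})"
proof -
  have B: "B h \<noteq> {}" "B h \<subseteq> S" "connected_on (B h) E" if "h \<in> K" for h
    using model that by (auto simp: complete_model_def)
  have disj: "B h \<inter> B h' = {}" and touch: "\<exists>x\<in>B h. \<exists>y\<in>B h'. E x y"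
    if "h \<in> K" "h' \<in> K" "h \<noteq> h'" for h h'
    using model that by (auto simp: complete_model_def)
  have clique: "E x y" if "x \<in> S" "y \<in> S" "E v x" "E v y" "x \<noteq> y" for x y
    using v that by (auto simp: small_simplicial_def)
  note other = complete_model_branch_set_other[OF assms(2) model v]
  have conn: "connected_on (B h - {v}) E" and nbr: "v \<in> B h \<Longrightarrow> \<exists>n\<in>B h - {v}. E n v" if hK: "h \<in> K" for h
  proof -
    obtain x0 where x0: "x0 \<in> B h" "x0 \<noteq> v" using other[OF hK] by blast
    have cl: "\<And>x y. x \<in> B h \<Longrightarrow> y \<in> B h \<Longrightarrow> E v x \<Longrightarrow> E v y \<Longrightarrow> x \<noteq> y \<Longrightarrow> E x y"
      using clique B(2)[OF hK] by blast
    note Diff = connected_on_Diff_simplicial[OF assms(1) B(3)[OF hK] _ x0 cl]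
    show "connected_on (B h - {v}) E" using Diff(1) B(3)[OF hK] by (cases "v \<in> B h") simp_all
    show "v \<in> B h \<Longrightarrow> \<exists>n\<in>B h - {v}. E n v" using Diff(2) .
  qed
  text \<open>An edge at \<open>v\<close> is rerouted through a neighbour of \<open>v\<close> in the same branch set.\<close>
  have reroute: "\<exists>x\<in>B h - {v}. E x y" if r: "h \<in> K" "v \<in> B h" "y \<in> S" "y \<notin> B h" "E v y" for h y
  proof -
    obtain n where n: "n \<in> B h - {v}" "E n v" using nbr r(1,2) by blast
    then have "E n y" using clique[of n y] B(2)[OF r(1)] r assms(1) by (auto dest: sympD)
    then show ?thesis using n by blast
  qed
  have touch': "\<exists>x\<in>B h - {v}. \<exists>y\<in>B h' - {v}. E x y" if hh: "h \<in> K" "h' \<in> K" "h \<noteq> h'" for h h'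
  proof -
    obtain x y where xy: "x \<in> B h" "y \<in> B h'" "E x y" using touch[OF hh] by blast
    have "x \<notin> B h'" "y \<notin> B h" "x \<in> S" "y \<in> S" using disj[OF hh] B(2) hh xy by auto
    consider "x \<noteq> v" "y \<noteq> v" | "x = v" | "y = v" by blast
    then show ?thesis
    proof cases
      case 2
      then show ?thesis using reroute[OF hh(1)] xy \<open>y \<notin> B h\<close> \<open>y \<in> S\<close> by blast
    next
      case 3
      then show ?thesis using reroute[OF hh(2)] xy \<open>x \<notin> B h'\<close> \<open>x \<in> S\<close> assms(1)
        by (metis Diff_iff singletonD sympD)
    qed (use xy in blast)
  qed
  show ?thesis unfolding complete_model_def
  proof (intro conjI ballI impI)
    fix h assume h: "h \<in> K"
    show "B h - {v} \<noteq> {}" using other[OF h] by blast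
    show "B h - {v} \<subseteq> S - {v}" using B(2)[OF h] by blast
    show "connected_on (B h - {v}) E" using conn[OF h] .
  next
    fix h h' assume "h \<in> K" "h' \<in> K" "h \<noteq> h'"
    then show "(B h - {v}) \<inter> (B h' - {v}) = {}" "\<exists>x\<in>B h - {v}. \<exists>y\<in>B h' - {v}. E x y"
      using disj touch' by blast+
  qed
qed

lemma no_complete_minor_finite:
  assumes "symp E" "4 \<le> card K"
    and simplicial: "\<And>S. finite S \<Longrightarrow> S \<noteq> {} \<Longrightarrow> \<exists>v. small_simplicial E S v"
  shows "finite S \<Longrightarrow> \<not> complete_model K S E B"
proof (induction "card S" arbitrary: S B rule: less_induct)
  case less
  show ?case
  proof
    assume model: "complete_model K S E B"
    obtain h where "h \<in> K" using assms(2) by fastforce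
    then have "S \<noteq> {}" using model by (auto simp: complete_model_def)
    then obtain v where v: "small_simplicial E S v" using simplicial less.prems by blast
    then have "card (S - {v}) < card S"
      using less.prems by (metis card_Diff1_less small_simplicial_def)
    then show False
      using less.hyps less.prems complete_model_Diff_simplicial[OF assms(1,2) model v] by blast
  qed
qed

lemma complete_model_finite_restriction:
  assumes "symp E" "finite K" "complete_model K V E B"
  shows "\<exists>S B'. finite S \<and> complete_model K S E B'"
proof -
  have "\<forall>h h'. \<exists>p. h \<in> K \<longrightarrow> h' \<in> K \<longrightarrow> h \<noteq> h' \<longrightarrow> fst p \<in> B h \<and> snd p \<in> B h' \<and> E (fst p) (snd p)"
    using assms(3) unfolding complete_model_def by fastforce
  then obtain e where e: "\<And>h h'. h \<in> K \<Longrightarrow> h' \<in> K \<Longrightarrow> h \<noteq> h' \<Longrightarrow>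
      fst (e h h') \<in> B h \<and> snd (e h h') \<in> B h' \<and> E (fst (e h h')) (snd (e h h'))"
    by metis
  define X where
    "X h = insert (SOME x. x \<in> B h) ((\<lambda>h'. fst (e h h')) ` (K - {h}) \<union> (\<lambda>h'. snd (e h' h)) ` (K - {h}))" for h
  have "\<forall>h\<in>K. \<exists>A. finite A \<and> X h \<subseteq> A \<and> A \<subseteq> B h \<and> connected_on A E"
  proof
    fix h assume h: "h \<in> K"
    show "\<exists>A. finite A \<and> X h \<subseteq> A \<and> A \<subseteq> B h \<and> connected_on A E"
    proof (rule connected_on_finite_subset[OF assms(1)])
    have "B h \<noteq> {}" "connected_on (B h) E" using assms(3) h by (auto simp: complete_model_def)
    then show "connected_on (B h) E" "finite (X h)" "X h \<noteq> {}" "X h \<subseteq> B h"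
      using assms(2) e h by (auto simp: X_def some_in_eq)
    qed
  qed
  from bchoice[OF this] obtain B' where
    B': "\<And>h. h \<in> K \<Longrightarrow> finite (B' h) \<and> X h \<subseteq> B' h \<and> B' h \<subseteq> B h \<and> connected_on (B' h) E"
    by blast
  have "complete_model K (\<Union>(B' ` K)) E B'"
    unfolding complete_model_def
  proof (intro conjI ballI impI)
    fix h assume h: "h \<in> K"
    show "B' h \<noteq> {}" "B' h \<subseteq> \<Union>(B' ` K)" "connected_on (B' h) E"
      using B'[OF h] h by (auto simp: X_def)
  next
    fix h h' assume hh: "h \<in> K" "h' \<in> K" "h \<noteq> h'"
    have "B h \<inter> B h' = {}" using assms(3) hh by (simp add: complete_model_def)
    then show "B' h \<inter> B' h' = {}" using B'[OF hh(1)] B'[OF hh(2)] by blast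
    have "fst (e h h') \<in> X h" "snd (e h h') \<in> X h'" using hh by (auto simp: X_def)
    then have "fst (e h h') \<in> B' h" "snd (e h h') \<in> B' h'" using B'[OF hh(1)] B'[OF hh(2)]
      by blast+
    then show "\<exists>x\<in>B' h. \<exists>y\<in>B' h'. E x y" using e[OF hh] by blast
  qed
  then show ?thesis using B' assms(2) by blast
qed

theorem no_complete_minor_if_simplicial:
  assumes "symp E" "4 \<le> card K"
    and "\<And>S. finite S \<Longrightarrow> S \<noteq> {} \<Longrightarrow> \<exists>v. small_simplicial E S v"
  shows "\<not> is_minor K (\<noteq>) V E"
proof
  assume "is_minor K (\<noteq>) V E"
  then obtain B where "complete_model K V E B" by (auto simp: is_minor_complete_iff)
  moreover have "finite K" using assms(2) by (intro card_ge_0_finite) simp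
  ultimately obtain S B' where "finite S" "complete_model K S E B'"
    using complete_model_finite_restriction[OF assms(1)] by blast
  then show False using no_complete_minor_finite[OF assms] by blast
qed

lemma small_simplicial_if_two_neighbours:
  assumes "symp E" "v \<in> S" "\<And>x. x \<in> S \<Longrightarrow> E v x \<Longrightarrow> x \<in> {a, b}" "a \<noteq> b \<Longrightarrow> E a b"
  shows "small_simplicial E S v"
  unfolding small_simplicial_def
proof (intro conjI ballI impI)
  fix x y assume "x \<in> S" "y \<in> S" "E v x" "E v y" "x \<noteq> y"
  then have "x \<in> {a, b}" "y \<in> {a, b}" using assms(3) by blast+
  then show "E x y" using \<open>x \<noteq> y\<close> assms(1,4) by (auto dest: sympD)
next
  fix x y z assume "x \<in> S" "y \<in> S" "z \<in> S" "E v x" "E v y" "E v z"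
  then have "x \<in> {a, b}" "y \<in> {a, b}" "z \<in> {a, b}" using assms(3) by blast+
  then show "x = y \<or> y = z \<or> x = z" by blast
qed (rule assms(2))

lemma farey_lower_neighbour_den_less:
  assumes "rat_den q \<ge> 2" "farey_adj (Some q) (Some z)" "rat_den z \<le> rat_den q"
  shows "rat_den z < rat_den q"
proof (rule ccontr)
  assume "\<not> ?thesis"
  then have "\<bar>rat_den q * (rat_num q - rat_num z)\<bar> = 1"
    using assms by (simp add: farey_adj_Some_Some algebra_simps)
  then have "rat_den q dvd 1" by (metis dvd_abs_iff dvd_triv_left)
  then show False using assms(1) zdvd_imp_le by fastforce
qed

text \<open>A non-integer \<open>q\<close> has exactly two Farey neighbours of smaller denominator (its Stern--Brocot
  parents): they lie on opposite sides of \<open>q\<close>, have denominators adding up to that of \<open>q\<close>, and are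
  adjacent.\<close>

lemma farey_lower_neighbours:
  assumes d2: "rat_den q \<ge> 2" and adj: "farey_adj (Some q) (Some z1)" "farey_adj (Some q) (Some z2)"
    and le: "rat_den z1 \<le> rat_den q" "rat_den z2 \<le> rat_den q" and "z1 \<noteq> z2"
  shows "rat_num q * rat_den z1 - rat_den q * rat_num z1 = - (rat_num q * rat_den z2 - rat_den q * rat_num z2)"
    and "farey_adj (Some z1) (Some z2)"
proof -
  define a d c1 c2 f1 f2
    where "a = rat_num q" "d = rat_den q" "c1 = rat_num z1" "c2 = rat_num z2" "f1 = rat_den z1" "f2 = rat_den z2"
  note defs = a_d_c1_c2_f1_f2_def
  have cop: "coprime a d" using coprime_rat_num_den by (simp add: defs)
  have "f1 > 0" "f2 > 0" "f1 < d" "f2 < d"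
    using rat_den_pos farey_lower_neighbour_den_less assms by (auto simp: defs)
  have s1: "\<bar>a * f1 - d * c1\<bar> = 1" and s2: "\<bar>a * f2 - d * c2\<bar> = 1"
    using adj by (simp_all add: farey_adj_Some_Some defs)
  have "a * f1 - d * c1 \<noteq> a * f2 - d * c2"
  proof
    assume "a * f1 - d * c1 = a * f2 - d * c2"
    then have "a * (f1 - f2) = d * (c1 - c2)" by (simp add: algebra_simps)
    then have "d dvd f1 - f2" using cop
      by (metis coprime_commute coprime_dvd_mult_right_iff dvd_triv_left)
    moreover have "\<bar>f1 - f2\<bar> < d"
      using \<open>f1 > 0\<close> \<open>f2 > 0\<close> \<open>f1 < d\<close> \<open>f2 < d\<close>
        by linarith
    ultimately have "f1 = f2" using dvd_imp_le_int[of "f1 - f2" d] by fastforce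
    then have "c1 = c2" using \<open>a * (f1 - f2) = d * (c1 - c2)\<close> \<open>f1 < d\<close> \<open>f1 > 0\<close> by simp
    with \<open>f1 = f2\<close> have "z1 = z2" using rat_eq_iff_cross[of z1 z2] by (simp add: defs)
    then show False using \<open>z1 \<noteq> z2\<close> by simp
  qed
  then show opp: "a * f1 - d * c1 = - (a * f2 - d * c2)" using s1 s2
    by (auto simp: abs_if split: if_splits)
  then have sum: "a * (f1 + f2) = d * (c1 + c2)" by (simp add: algebra_simps)
  then have "d dvd f1 + f2" using cop by (metis coprime_commute coprime_dvd_mult_right_iff dvd_triv_left)
  then obtain k where k: "f1 + f2 = d * k" by blast
  have "0 < d * k" "d * k < d * 2"
    using k \<open>f1 > 0\<close> \<open>f2 > 0\<close> \<open>f1 < d\<close> \<open>f2 < d\<close>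
      by linarith+
  then have "k = 1" using \<open>f1 < d\<close> \<open>f1 > 0\<close> by (simp add: zero_less_mult_iff)
  then have "f1 + f2 = d" using k by simp
  then have "d * (c1 + c2) = d * a" using sum by (metis mult.commute)
  then have "c1 + c2 = a" using \<open>f1 < d\<close> \<open>f1 > 0\<close> by simp
  have "c1 * f2 - f1 * c2 = c1 * (f1 + f2) - f1 * (c1 + c2)" by (simp add: algebra_simps)
  also have "\<dots> = - (a * f1 - d * c1)"
    by (simp only: \<open>f1 + f2 = d\<close> \<open>c1 + c2 = a\<close>) (simp add: algebra_simps)
  finally have "c1 * f2 - f1 * c2 = - (a * f1 - d * c1)" .
  then show "farey_adj (Some z1) (Some z2)" using s1 by (simp add: farey_adj_Some_Some defs)
qed

lemma farey_small_simplicial_max_den: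
  assumes "Some q \<in> S" "rat_den q \<ge> 2" and max: "\<And>z. Some z \<in> S \<Longrightarrow> rat_den z \<le> rat_den q"
  shows "small_simplicial farey_adj S (Some q)"
  unfolding small_simplicial_def
proof (intro conjI ballI impI)
  have lower: "\<exists>z. x = Some z \<and> rat_den z \<le> rat_den q" if "x \<in> S" "farey_adj (Some q) x" for x
    using that assms(2) max by (cases x) (auto simp: farey_adj_Some_None)
  show "Some q \<in> S" by fact
  fix x y assume "x \<in> S" "y \<in> S" "farey_adj (Some q) x" "farey_adj (Some q) y" "x \<noteq> y"
  then show "farey_adj x y" using lower[of x] lower[of y] farey_lower_neighbours(2)[OF assms(2)]
    by fastforce
next
  define \<sigma> where "\<sigma> z = rat_num q * rat_den z - rat_den q * rat_num z" for z
  fix x y w assume xyw: "x \<in> S" "y \<in> S" "w \<in> S" "farey_adj (Some q) x" "farey_adj (Some q) y" "farey_adj (Some q) w"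
  then obtain z1 z2 z3 where z: "x = Some z1" "y = Some z2" "w = Some z3"
    and dens: "rat_den z1 \<le> rat_den q" "rat_den z2 \<le> rat_den q" "rat_den z3 \<le> rat_den q"
    using assms(2) max by (cases x; cases y; cases w) (auto simp: farey_adj_Some_None)
  show "x = y \<or> y = w \<or> x = w"
  proof (rule ccontr)
    assume "\<not> ?thesis"
    then have "z1 \<noteq> z2" "z2 \<noteq> z3" "z1 \<noteq> z3" using z by auto
    moreover have a: "farey_adj (Some q) (Some z1)" "farey_adj (Some q) (Some z2)" "farey_adj (Some q) (Some z3)"
      using xyw z by simp_all
    note opp = farey_lower_neighbours(1)[OF assms(2)]
    ultimately have "\<sigma> z1 = - \<sigma> z2" "\<sigma> z2 = - \<sigma> z3" "\<sigma> z1 = - \<sigma> z3"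
      using opp[OF a(1,2) dens(1,2)] opp[OF a(2,3) dens(2,3)] opp[OF a(1,3) dens(1,3)]
      unfolding \<sigma>_def by blast+
    moreover have "\<bar>\<sigma> z1\<bar> = 1" using a(1)
      by (simp add: farey_adj_Some_Some \<sigma>_def)
    ultimately show False by linarith
  qed
qed

lemma farey_small_simplicial_max_int:
  assumes "Some n \<in> S" and max: "\<And>z. Some z \<in> S \<Longrightarrow> rat_den z = 1 \<and> z \<le> n"
  shows "small_simplicial farey_adj S (Some n)"
proof (rule small_simplicial_if_two_neighbours[of _ _ _ None "Some (n - 1)"])
  show "symp farey_adj" by (simp add: farey_adj_sym sympI)
  have "rat_den n = 1" using max assms(1) by blast
  then have n: "n = of_int (rat_num n)" by (rule rat_den_1_imp_int)
  then show "farey_adj None (Some (n - 1))"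
    by (metis farey_adj_None_Some of_int_1 of_int_diff rat_num_den_of_int(2))
  fix x assume "x \<in> S" "farey_adj (Some n) x"
  show "x \<in> {None, Some (n - 1)}"
  proof (cases x)
    case (Some z)
    then have "rat_den z = 1" "z \<le> n" using max \<open>x \<in> S\<close> by blast+
    moreover have "\<bar>rat_num n - rat_num z\<bar> = 1"
      using \<open>farey_adj (Some n) x\<close> Some \<open>rat_den z = 1\<close> \<open>rat_den n = 1\<close> by (simp add: farey_adj_Some_Some)
    ultimately have "z = n - 1" using n rat_den_1_imp_int[of z]
      by (smt (verit, best) of_int_diff of_int_le_iff of_int_1)
    then show ?thesis using Some by simp
  qed simp
qed (use assms(1) in simp)

lemma farey_small_simplicial:
  assumes "finite S" "S \<noteq> {}"
  shows "\<exists>v. small_simplicial farey_adj S v"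
proof -
  define T where "T = Some -` S"
  have "finite T" unfolding T_def using assms(1) by (simp add: finite_vimageI)
  have "rat_den z = 1 \<or> rat_den z \<ge> 2" for z using rat_den_pos[of z] by linarith
  then consider "T = {}" | "T \<noteq> {}" "\<forall>z\<in>T. rat_den z = 1" | "T \<noteq> {}" "\<exists>z\<in>T. rat_den z \<ge> 2"
    by blast
  then show ?thesis
  proof cases
    case 1
    have "x = None" if "x \<in> S" for x using 1 that by (cases x) (auto simp: T_def)
    then have "S = {None}" using assms(2) by blast
    then show ?thesis using small_simplicial_if_two_neighbours[of farey_adj None S None None]
      by (auto simp: farey_adj_sym sympI)
  next
    case 2
    then have "Max T \<in> T" "\<And>z. z \<in> T \<Longrightarrow> z \<le> Max T"
      using \<open>finite T\<close> by simp_all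
    then show ?thesis using farey_small_simplicial_max_int[of "Max T" S] 2 by (auto simp: T_def)
  next
    case 3
    have "Max (rat_den ` T) \<in> rat_den ` T" using \<open>finite T\<close> 3 by simp
    then obtain q where q: "q \<in> T" "rat_den q = Max (rat_den ` T)" by auto
    then have "rat_den z \<le> rat_den q" if "z \<in> T" for z using \<open>finite T\<close> that by simp
    moreover from this have "rat_den q \<ge> 2" using 3 by force
    ultimately show ?thesis using farey_small_simplicial_max_den[of q S] q(1) by (auto simp: T_def)
  qed
qed

theorem farey_no_complete_minor: "4 \<le> card K \<Longrightarrow> \<not> is_minor K (\<noteq>) V farey_adj"
  by (rule no_complete_minor_if_simplicial) (auto simp: sympI farey_adj_sym farey_small_simplicial)

section \<open>Finite separators\<close>

lemma nth_in_inner: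
  assumes "0 < i" "i < length p - 1"
  shows "p ! i \<in> inner p"
proof -
  have "i - 1 < length (butlast (tl p))" using assms by simp
  moreover have "butlast (tl p) ! (i - 1) = p ! i" using assms by (simp add: nth_butlast nth_tl)
  ultimately show ?thesis unfolding inner_def by (metis nth_mem)
qed

lemma inner_rev: "inner (rev p) = inner p"
proof -
  have "tl (rev xs) = rev (butlast xs)" for xs :: "'a list" by (metis butlast_rev rev_rev_ident)
  then show ?thesis unfolding inner_def by (simp add: butlast_tl)
qed

lemma inf_indep_paths_sym:
  assumes "symp E" "inf_indep_paths V E u v"
  shows "inf_indep_paths V E v u"
proof -
  obtain P where P: "infinite P" "\<forall>p\<in>P. path_in V E p \<and> hd p = u \<and> last p = v"
    "\<forall>p\<in>P. \<forall>q\<in>P. p \<noteq> q \<longrightarrow> inner p \<inter> inner q = {}"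
    using assms(2) by (auto simp: inf_indep_paths_def)
  have "path_in V E (rev p) \<and> hd (rev p) = v \<and> last (rev p) = u" if "p \<in> P" for p
    using P(2) that assms(1)
    by (auto simp: path_in_def walk_in_iff_successively hd_rev last_rev dest: sympD elim!: successively_mono)
  moreover have "infinite (rev ` P)" using P(1) by (simp add: finite_image_iff)
  ultimately show ?thesis using P(3) unfolding inf_indep_paths_def
    by (intro exI[of _ "rev ` P"]) (auto simp: inner_rev)
qed

text \<open>Distinct independent paths meet \<open>S\<close> in distinct inner vertices.\<close>

lemma not_inf_indep_paths_if_inner_meets:
  assumes "finite S" "u \<noteq> v"
    and meets: "\<And>p. path_in V E p \<Longrightarrow> hd p = u \<Longrightarrow> last p = v \<Longrightarrow> length p \<ge> 3 \<Longrightarrow> inner p \<inter> S \<noteq> {}"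
  shows "\<not> inf_indep_paths V E u v"
proof
  assume "inf_indep_paths V E u v"
  then obtain P where P: "infinite P" "\<forall>p\<in>P. path_in V E p \<and> hd p = u \<and> last p = v"
    "\<forall>p\<in>P. \<forall>q\<in>P. p \<noteq> q \<longrightarrow> inner p \<inter> inner q = {}"
    by (auto simp: inf_indep_paths_def)
  define P' where "P' = P - {[u, v]}"
  have "length p \<ge> 3" if "p \<in> P'" for p
  proof -
    have p: "p \<noteq> []" "hd p = u" "last p = v" "p \<noteq> [u, v]"
      using that P(2) by (auto simp: P'_def path_in_def walk_in_def)
    then show ?thesis using \<open>u \<noteq> v\<close>
      by (cases p rule: remdups_adj.cases) (auto split: if_splits, metis Suc_le_eq length_greater_0_conv)
  qed
  then have "\<forall>p\<in>P'. \<exists>s. s \<in> inner p \<inter> S" using meets P(2)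
    by (auto simp: P'_def)
  from bchoice[OF this] obtain g where g: "\<forall>p\<in>P'. g p \<in> inner p \<inter> S" by blast
  have "inj_on g P'"
  proof (rule inj_onI)
    fix p q assume "p \<in> P'" "q \<in> P'" "g p = g q"
    then have "g p \<in> inner p \<inter> inner q" using g by force
    then show "p = q" using P(3) \<open>p \<in> P'\<close> \<open>q \<in> P'\<close>
      by (auto simp: P'_def)
  qed
  moreover have "g ` P' \<subseteq> S" using g by auto
  ultimately have "finite P'" using assms(1) finite_imageD finite_subset by blast
  then show False using P(1) by (simp add: P'_def)
qed

lemma path_leaving_meets_separator:
  assumes p: "path_in V E p" "hd p = v" "last p = u" "length p \<ge> 3"
    and "v \<in> I" "u \<notin> I" "u \<notin> S" "v \<notin> S"
    and leave: "\<And>a b. E a b \<Longrightarrow> a \<in> I \<Longrightarrow> b \<notin> I \<Longrightarrow> a \<in> S \<or> b \<in> S \<or> (a = v \<and> b = u)"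
  shows "inner p \<inter> S \<noteq> {}"
proof -
  define n where "n = length p"
  have "p \<noteq> []" using p(4) by auto
  have p0: "p ! 0 = v" and pn: "p ! (n - 1) = u"
    using p \<open>p \<noteq> []\<close> by (auto simp: hd_conv_nth last_conv_nth n_def)
  have "\<exists>j. j < n \<and> p ! j \<notin> I" using pn \<open>u \<notin> I\<close> p(4)
    by (intro exI[of _ "n - 1"]) (auto simp: n_def)
  define j where "j = (LEAST j. j < n \<and> p ! j \<notin> I)"
  have j: "j < n" "p ! j \<notin> I"
    using LeastI_ex[OF \<open>\<exists>j. j < n \<and> p ! j \<notin> I\<close>] by (auto simp: j_def)
  have "j \<noteq> 0"
  proof
    assume "j = 0"
    then show False using j(2) p0 \<open>v \<in> I\<close> by simp
  qed
  have "p ! (j - 1) \<in> I"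
    using not_less_Least[of "j - 1" "\<lambda>j. j < n \<and> p ! j \<notin> I"] \<open>j \<noteq> 0\<close> j(1) by (auto simp: j_def)
  moreover have "E (p ! (j - 1)) (p ! j)"
    using p(1) j(1) \<open>j \<noteq> 0\<close> unfolding path_in_def walk_in_def n_def
      by (metis Suc_pred' neq0_conv)
  ultimately have "p ! (j - 1) \<in> S \<or> p ! j \<in> S \<or> (p ! (j - 1) = v \<and> p ! j = u)"
    using leave j(2) by blast
  moreover have "distinct p" using p(1) by (simp add: path_in_def)
  ultimately show ?thesis
  proof (elim disjE)
    assume "p ! (j - 1) \<in> S"
    then have "j - 1 \<noteq> 0" using p0 \<open>v \<notin> S\<close> by auto
    moreover have "j - 1 < n - 1" using j(1) \<open>j \<noteq> 0\<close> by linarith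
    ultimately show ?thesis using \<open>p ! (j - 1) \<in> S\<close> nth_in_inner[of "j - 1" p]
      by (auto simp: n_def)
  next
    assume "p ! j \<in> S"
    then have "j \<noteq> n - 1" using pn \<open>u \<notin> S\<close> by auto
    then have "j < n - 1" using j(1) by linarith
    then show ?thesis using \<open>p ! j \<in> S\<close> \<open>j \<noteq> 0\<close> nth_in_inner[of j p] by (auto simp: n_def)
  next
    assume "p ! (j - 1) = v \<and> p ! j = u"
    moreover have "j - 1 < length p" "j < length p" "0 < length p" "n - 1 < length p" using j(1)
      by (auto simp: n_def)
    ultimately have "j - 1 = 0" "j = n - 1"
      using p0 pn nth_eq_iff_index_eq[OF \<open>distinct p\<close>] by metis+
    then show ?thesis using p(4) by (simp add: n_def)
  qed
qed

theorem not_inf_indep_paths_if_finite_separator: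
  assumes "symp E" "finite S" "u \<noteq> v" "v \<in> I" "u \<notin> I" "u \<notin> S" "v \<notin> S"
    and "\<And>a b. E a b \<Longrightarrow> a \<in> I \<Longrightarrow> b \<notin> I \<Longrightarrow> a \<in> S \<or> b \<in> S \<or> (a = v \<and> b = u)"
  shows "\<not> inf_indep_paths V E v u" "\<not> inf_indep_paths V E u v"
proof -
  show "\<not> inf_indep_paths V E v u"
  proof (rule not_inf_indep_paths_if_inner_meets[OF assms(2) assms(3)[symmetric]])
    fix p assume "path_in V E p" "hd p = v" "last p = u" "length p \<ge> 3"
    then show "inner p \<inter> S \<noteq> {}"
      by (rule path_leaving_meets_separator[OF _ _ _ _ assms(4-8)])
  qed
  then show "\<not> inf_indep_paths V E u v" using inf_indep_paths_sym[OF assms(1)] by blast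
qed

section \<open>Rational sequences converging to an irrational\<close>

lemma infinite_range_if_tendsto_irrational:
  fixes s :: real
  assumes "(\<lambda>k. of_rat (c k)) \<longlonglongrightarrow> s" "s \<notin> \<rat>"
  shows "infinite (range c)"
proof
  assume "finite (range c)"
  then have "closed (of_rat ` range c :: real set)" by (simp add: finite_imp_closed)
  from closed_sequentially[OF this _ assms(1)] have "s \<in> of_rat ` range c" by simp
  then show False using assms(2) by (auto simp: Rats_def)
qed

lemma finite_near_rational_if_tendsto_irrational:
  fixes s :: real
  assumes "(\<lambda>k. of_rat (c k)) \<longlonglongrightarrow> s" "s \<notin> \<rat>"
  shows "\<exists>\<epsilon>>0. finite {x \<in> range c. \<bar>x - v\<bar> < \<epsilon>}"
proof -
  define \<delta> where "\<delta> = \<bar>s - of_rat v\<bar> / 2"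
  have "\<delta> > 0" using assms(2) by (auto simp: \<delta>_def)
  then obtain K where K: "\<And>k. k \<ge> K \<Longrightarrow> \<bar>of_rat (c k) - s\<bar> < \<delta>" using LIMSEQ_D[OF assms(1)] by auto
  obtain r where "r \<in> \<rat>" "0 < r" "r < \<delta>"
    using Rats_dense_in_real[OF \<open>\<delta> > 0\<close>] by blast
  then obtain \<epsilon> where \<epsilon>: "0 < \<epsilon>" "of_rat \<epsilon> < \<delta>"
    by (auto elim: Rats_cases)
  have "{x \<in> range c. \<bar>x - v\<bar> < \<epsilon>} \<subseteq> c ` {..<K}"
  proof clarify
    fix k assume "\<bar>c k - v\<bar> < \<epsilon>"
    then have "\<bar>of_rat (c k) - of_rat v\<bar> < (of_rat \<epsilon> :: real)"
      by (metis abs_of_rat of_rat_diff of_rat_less)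
    have "\<not> K \<le> k"
    proof
      assume "K \<le> k"
      then have "\<bar>of_rat (c k) - s\<bar> < \<delta>" by (rule K)
      moreover have "\<bar>s - of_rat v\<bar> \<le> \<bar>of_rat (c k) - s\<bar> + \<bar>of_rat (c k) - of_rat v\<bar>" by arith
      ultimately show False
        using \<open>\<bar>of_rat (c k) - of_rat v\<bar> < of_rat \<epsilon>\<close> \<epsilon>(2)
          unfolding \<delta>_def by argo
    qed
    then show "c k \<in> c ` {..<K}" by simp
  qed
  then show ?thesis using \<epsilon>(1) finite_subset by blast
qed

definition dyadic_below :: "real \<Rightarrow> nat \<Rightarrow> rat" where
  "dyadic_below s k = of_int \<lfloor>2 ^ k * s\<rfloor> / 2 ^ k"

lemma dyadic_below_bounds: "of_rat (dyadic_below s k) \<le> s" "s - 1 / 2 ^ k < of_rat (dyadic_below s k)"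
proof -
  have F: "of_rat (dyadic_below s k) = of_int \<lfloor>2 ^ k * s\<rfloor> / (2 ^ k :: real)"
    by (simp add: dyadic_below_def of_rat_divide of_rat_power)
  have "of_int \<lfloor>2 ^ k * s\<rfloor> \<le> 2 ^ k * s" "2 ^ k * s - 1 < of_int \<lfloor>2 ^ k * s\<rfloor>" by linarith+
  have "of_int \<lfloor>2 ^ k * s\<rfloor> / 2 ^ k \<le> (2 ^ k * s) / (2 ^ k :: real)"
    using \<open>of_int \<lfloor>2 ^ k * s\<rfloor> \<le> 2 ^ k * s\<close>
      by (rule divide_right_mono) simp
  also have "\<dots> = s" by simp
  finally show "of_rat (dyadic_below s k) \<le> s" unfolding F .
  have "s - 1 / 2 ^ k = (2 ^ k * s - 1) / (2 ^ k :: real)" by (simp add: field_simps)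
  also have "\<dots> < of_int \<lfloor>2 ^ k * s\<rfloor> / 2 ^ k"
    using \<open>2 ^ k * s - 1 < of_int \<lfloor>2 ^ k * s\<rfloor>\<close>
      by (rule divide_strict_right_mono) simp
  finally show "s - 1 / 2 ^ k < of_rat (dyadic_below s k)" unfolding F .
qed

lemma dyadic_below_tendsto: "(\<lambda>k. of_rat (dyadic_below s k)) \<longlonglongrightarrow> s"
proof (rule tendsto_sandwich[of "\<lambda>k. s - 1 / 2 ^ k" _ _ "\<lambda>_. s"])
  show "(\<lambda>k. s - 1 / 2 ^ k) \<longlonglongrightarrow> s"
    using tendsto_diff[OF tendsto_const LIMSEQ_divide_realpow_zero[of 2 1]] by simp
qed (auto simp: less_imp_le dyadic_below_bounds)

lemma dyadic_below_nonneg: "0 \<le> s \<Longrightarrow> 0 \<le> dyadic_below s k"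
  by (simp add: dyadic_below_def)

lemma dyadic_below_le_1: "s \<le> 1 \<Longrightarrow> dyadic_below s k \<le> 1"
  using dyadic_below_bounds(1)[of s k] by (metis of_rat_le_1_iff order.trans)

definition some_irrational :: real where
  "some_irrational = (SOME s. s \<in> {0<..<1} - \<rat>)"

lemma some_irrational: "0 < some_irrational" "some_irrational < 1" "some_irrational \<notin> \<rat>"
proof -
  have "uncountable {0<..<1::real}" by (simp add: uncountable_open_interval)
  then have "\<not> {0<..<1::real} \<subseteq> \<rat>" using countable_rat countable_subset by blast
  then obtain s :: real where "s \<in> {0<..<1} - \<rat>" by blast
  then have "some_irrational \<in> {0<..<1} - \<rat>" unfolding some_irrational_def by (rule someI)
  then show "0 < some_irrational" "some_irrational < 1" "some_irrational \<notin> \<rat>" by auto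
qed

section \<open>The Farey graph with an apex\<close>

text \<open>The graph lives on \<^typ>\<open>nat\<close>: Farey vertices are encoded by even numbers, the apex by \<open>1\<close>.\<close>

definition farey_vertex :: "rat option \<Rightarrow> nat" where
  "farey_vertex x = 2 * to_nat x"

definition apex :: nat where
  "apex = 1"

definition apex_nbrs :: "rat set" where
  "apex_nbrs = {0, 1/2, 1} \<union> range (dyadic_below some_irrational)"

definition apex_graph_V :: "nat set" where
  "apex_graph_V = insert apex (range farey_vertex)"

definition apex_graph_E :: "nat \<Rightarrow> nat \<Rightarrow> bool" where
  "apex_graph_E a b \<longleftrightarrow> (\<exists>x y. a = farey_vertex x \<and> b = farey_vertex y \<and> farey_adj x y) \<or>
     (\<exists>c\<in>apex_nbrs. a = apex \<and> b = farey_vertex (Some c) \<or> a = farey_vertex (Some c) \<and> b = apex)"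

lemma farey_vertex_eq_iff [simp]: "farey_vertex x = farey_vertex y \<longleftrightarrow> x = y"
  by (simp add: farey_vertex_def)

lemma farey_vertex_neq_apex [simp]: "farey_vertex x \<noteq> apex" "apex \<noteq> farey_vertex x"
  by (simp_all add: farey_vertex_def apex_def)

lemma apex_graph_E_farey [simp]: "apex_graph_E (farey_vertex x) (farey_vertex y) \<longleftrightarrow> farey_adj x y"
  by (auto simp: apex_graph_E_def)

lemma apex_graph_E_apex [simp]:
  "apex_graph_E apex (farey_vertex x) \<longleftrightarrow> (\<exists>c\<in>apex_nbrs. x = Some c)"
  "apex_graph_E (farey_vertex x) apex \<longleftrightarrow> (\<exists>c\<in>apex_nbrs. x = Some c)"
  "\<not> apex_graph_E apex apex"
  by (auto simp: apex_graph_E_def)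

lemma symp_apex_graph_E: "symp apex_graph_E"
  unfolding apex_graph_E_def by (rule sympI) (blast dest: farey_adj_sym)

lemma apex_graph_V_cases: "a \<in> apex_graph_V \<Longrightarrow> a = apex \<or> (\<exists>x. a = farey_vertex x)"
  by (auto simp: apex_graph_V_def)

lemma simple_graph_apex_graph: "simple_graph apex_graph_V apex_graph_E"
  unfolding simple_graph_def
proof (intro allI impI conjI)
  fix u v assume "apex_graph_E u v"
  then show "u \<in> apex_graph_V" "v \<in> apex_graph_V" "u \<noteq> v" "apex_graph_E v u"
    using farey_adj_irrefl symp_apex_graph_E
      by (auto simp: apex_graph_E_def apex_graph_V_def farey_adj_commute)
qed

lemma apex_nbrs_subset_01: "c \<in> apex_nbrs \<Longrightarrow> 0 \<le> c \<and> c \<le> 1"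
  using some_irrational dyadic_below_nonneg dyadic_below_le_1 by (auto simp: apex_nbrs_def)

lemma infinite_apex_nbrs: "infinite apex_nbrs"
  using infinite_range_if_tendsto_irrational[OF dyadic_below_tendsto some_irrational(3)]
  by (simp add: apex_nbrs_def)

lemma apex_nbrs_near_rational: "\<exists>\<epsilon>>0. finite {c \<in> apex_nbrs. \<bar>c - v\<bar> < \<epsilon>}"
proof -
  obtain \<epsilon> where "\<epsilon> > 0" "finite {x \<in> range (dyadic_below some_irrational). \<bar>x - v\<bar> < \<epsilon>}"
    using finite_near_rational_if_tendsto_irrational[OF dyadic_below_tendsto some_irrational(3)] by blast
  moreover have "{c \<in> apex_nbrs. \<bar>c - v\<bar> < \<epsilon>} \<subseteq>
      {0, 1/2, 1} \<union> {x \<in> range (dyadic_below some_irrational). \<bar>x - v\<bar> < \<epsilon>}"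
    by (auto simp: apex_nbrs_def)
  ultimately show ?thesis by (meson finite_Un finite.emptyI finite_insert finite_subset)
qed

lemma inf_edge_connected_apex_graph: "inf_edge_connected apex_graph_V apex_graph_E"
  unfolding inf_edge_connected_def
proof (intro conjI allI impI)
  show "\<exists>u\<in>apex_graph_V. \<exists>v\<in>apex_graph_V. u \<noteq> v"
    by (intro bexI[of _ apex] bexI[of _ "farey_vertex None"]) (auto simp: apex_graph_V_def)
next
  fix F :: "nat set set" assume "finite F"
  define D where "D = delete_edges apex_graph_E F"
  have "finite ((`) farey_vertex -` F)"
    using \<open>finite F\<close> by (rule finite_vimageI) (simp add: inj_def inj_image_eq_iff)
  have farey_edge: "D\<^sup>*\<^sup>* (farey_vertex x) (farey_vertex y)" if xy: "farey_adj x y" for x y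
  proof -
    obtain p where p: "p \<noteq> []" "hd p = x" "last p = y"
      "successively (\<lambda>u v. farey_adj u v \<and> {u, v} \<notin> (`) farey_vertex -` F) p"
      using farey_detour[OF xy \<open>finite ((`) farey_vertex -` F)\<close>] by blast
    then have "successively D (map farey_vertex p)"
      unfolding successively_map by (auto simp: D_def delete_edges_def elim!: successively_mono)
    then show ?thesis using successively_imp_rtranclp p(1-3) by (fastforce simp: hd_map last_map)
  qed
  have "D\<^sup>*\<^sup>* (farey_vertex None) (farey_vertex y)" if "farey_adj\<^sup>*\<^sup>* None y" for y
    using that by (induction rule: rtranclp_induct) (auto intro: rtranclp_trans farey_edge)
  then have reach_farey: "D\<^sup>*\<^sup>* (farey_vertex None) (farey_vertex x)" for x
    using farey_rtranclp_None by (cases x) auto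
  text \<open>Only finitely many of the infinitely many apex edges are deleted.\<close>
  have "\<not> (\<lambda>c. {farey_vertex (Some c), apex}) ` apex_nbrs \<subseteq> F"
  proof
    assume "(\<lambda>c. {farey_vertex (Some c), apex}) ` apex_nbrs \<subseteq> F"
    moreover have "inj_on (\<lambda>c. {farey_vertex (Some c), apex}) apex_nbrs"
      by (auto simp: inj_on_def doubleton_eq_iff)
    ultimately show False using \<open>finite F\<close> infinite_apex_nbrs
      by (meson finite_imageD finite_subset)
  qed
  then obtain c where "c \<in> apex_nbrs" "{farey_vertex (Some c), apex} \<notin> F" by blast
  then have "D (farey_vertex (Some c)) apex" by (auto simp: D_def delete_edges_def)
  then have "D\<^sup>*\<^sup>* (farey_vertex None) apex" using reach_farey[of "Some c"] by simp
  then have reach: "D\<^sup>*\<^sup>* (farey_vertex None) a" if "a \<in> apex_graph_V" for a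
    using that reach_farey by (auto simp: apex_graph_V_def)
  have "symp D" using symp_apex_graph_E
    by (auto simp: D_def delete_edges_def symp_def insert_commute)
  then have "(edge_in apex_graph_V D)\<^sup>*\<^sup>* u v" if "u \<in> apex_graph_V" "v \<in> apex_graph_V" for u v
  proof -
    have "edge_in apex_graph_V D = D"
      using simple_graph_apex_graph
        by (auto simp: edge_in_def D_def delete_edges_def simple_graph_def fun_eq_iff)
    then show ?thesis using reach[OF that(1)] reach[OF that(2)] \<open>symp D\<close>
      by (metis rtranclp_trans sympD symp_rtranclp)
  qed
  then show "connected_on apex_graph_V (delete_edges apex_graph_E F)"
    by (simp add: connected_on_iff_rtranclp D_def)
qed

lemma apex_graph_edge_leaving_interval:
  assumes lq: "farey_adj (Some l) (Some q)" and qr: "farey_adj (Some q) (Some r)" and "l < q" "q < r"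
    and e: "apex_graph_E (farey_vertex (Some z)) b" and "l < z" "z < r"
    and out: "b \<notin> (farey_vertex \<circ> Some) ` {l<..<r}"
  shows "b = apex \<and> z \<in> apex_nbrs \<or> b = farey_vertex (Some l) \<or> b = farey_vertex (Some r) \<or>
    (z = q \<and> b \<in> farey_vertex ` {y. farey_adj (Some q) y \<and> (\<forall>t. y = Some t \<longrightarrow> t \<le> l \<or> r \<le> t)})"
proof -
  from e consider "b = apex" "z \<in> apex_nbrs" | y where "b = farey_vertex y" "farey_adj (Some z) y"
    unfolding apex_graph_E_def by auto
  then show ?thesis
  proof cases
    case 2
    have y_out: "\<not> (l < t \<and> t < r)" if "y = Some t" for t using out 2(1) that by auto
    consider "z = q" | "z < q" | "q < z" by linarith
    then show ?thesis
    proof cases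
      case 1
      then show ?thesis using 2 y_out by (auto simp: not_less)
    next
      case 2
      have "y \<noteq> Some q" using y_out \<open>l < q\<close> \<open>q < r\<close> by blast
      have "y = Some l"
      proof (rule ccontr)
        assume "y \<noteq> Some l"
        then obtain t where "y = Some t" "l < t" "t < q"
          using farey_adj_inside[OF lq \<open>l < z\<close> 2 \<open>farey_adj (Some z) y\<close>] \<open>y \<noteq> Some q\<close> by blast
        then show False using y_out \<open>q < r\<close> by force
      qed
      then show ?thesis using \<open>b = farey_vertex y\<close> by simp
    next
      case 3
      have "y \<noteq> Some q" using y_out \<open>l < q\<close> \<open>q < r\<close> by blast
      have "y = Some r"
      proof (rule ccontr)
        assume "y \<noteq> Some r"
        then obtain t where "y = Some t" "q < t" "t < r"
          using farey_adj_inside[OF qr 3 \<open>z < r\<close> \<open>farey_adj (Some z) y\<close>] \<open>y \<noteq> Some q\<close> by blast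
        then show False using y_out \<open>l < q\<close> by force
      qed
      then show ?thesis using \<open>b = farey_vertex y\<close> by simp
    qed
  qed simp
qed

text \<open>A rational vertex \<open>q\<close> is separated from any other vertex by a finite set: take Farey
  neighbours \<open>l < q < r\<close> so close that the interval \<open>(l, r)\<close> excludes the other vertex; the edges
  leaving \<open>(l, r)\<close> end in \<open>l\<close>, \<open>r\<close>, the apex (from the finitely many apex neighbours near \<open>q\<close>), or
  are among the finitely many edges from \<open>q\<close> to outside \<open>(l, r)\<close>.\<close>

lemma apex_graph_rational_separated:
  assumes "u \<in> apex_graph_V" "u \<noteq> farey_vertex (Some q)"
  shows "\<not> inf_indep_paths apex_graph_V apex_graph_E (farey_vertex (Some q)) u"
    "\<not> inf_indep_paths apex_graph_V apex_graph_E u (farey_vertex (Some q))"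
proof -
  define v where "v = farey_vertex (Some q)"
  obtain \<epsilon>0 where "\<epsilon>0 > 0" and fin_near: "finite {c \<in> apex_nbrs. \<bar>c - q\<bar> < \<epsilon>0}"
    using apex_nbrs_near_rational by blast
  obtain \<epsilon> where "\<epsilon> > 0" "\<epsilon> \<le> \<epsilon>0" and far_u: "\<And>z. u = farey_vertex (Some z) \<Longrightarrow> \<epsilon> \<le> \<bar>z - q\<bar>"
  proof (cases "\<exists>z. u = farey_vertex (Some z)")
    case True
    then obtain z where z: "u = farey_vertex (Some z)" by blast
    then have "z \<noteq> q" using assms(2) by auto
    then show ?thesis using that[of "min \<epsilon>0 \<bar>z - q\<bar>"] \<open>\<epsilon>0 > 0\<close> z by auto
  qed (use \<open>\<epsilon>0 > 0\<close> in auto)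
  obtain l r where lr: "l < q" "q < r" "q - l < \<epsilon>" "r - q < \<epsilon>"
    and adj: "farey_adj (Some l) (Some q)" "farey_adj (Some q) (Some r)"
    using farey_neighbours_near[OF \<open>\<epsilon> > 0\<close>] by blast
  have u_outside: "z \<le> l \<or> r \<le> z" and u_ends: "z \<noteq> l" "z \<noteq> r" if "u = farey_vertex (Some z)" for z
    using far_u[OF that] lr by auto
  define I where "I = (farey_vertex \<circ> Some) ` {l<..<r}"
  define Far where "Far = {y. farey_adj (Some q) y \<and> (\<forall>t. y = Some t \<longrightarrow> t \<le> l \<or> r \<le> t)}"
  define N where "N = {c \<in> apex_nbrs. l < c \<and> c < r \<and> c \<noteq> q}"
  define S where "S = ({farey_vertex (Some l), farey_vertex (Some r), apex} \<union> farey_vertex ` Far \<union>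
    (farey_vertex \<circ> Some) ` N) - {u}"
  have "finite Far" unfolding Far_def using finite_farey_neighbours_outside[OF lr(1,2)] .
  moreover have "N \<subseteq> {c \<in> apex_nbrs. \<bar>c - q\<bar> < \<epsilon>0}"
    using lr \<open>\<epsilon> \<le> \<epsilon>0\<close> by (auto simp: N_def)
  then have "finite N" using fin_near finite_subset by blast
  ultimately have "finite S" by (simp add: S_def)
  have "v \<in> I" using lr by (simp add: I_def v_def)
  have "u \<notin> I" using u_outside by (auto simp: I_def)
  have "v \<notin> S" using farey_adj_irrefl lr by (auto simp: S_def v_def Far_def N_def)
  have "a \<in> S \<or> b \<in> S \<or> (a = v \<and> b = u)" if ab: "apex_graph_E a b" "a \<in> I" "b \<notin> I" for a b
  proof -
    obtain z where z: "a = farey_vertex (Some z)" "l < z" "z < r" using ab(2) by (auto simp: I_def)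
    have "a \<noteq> u" using ab(2) \<open>u \<notin> I\<close> by auto
    show ?thesis
      using apex_graph_edge_leaving_interval[OF adj lr(1,2) ab(1)[unfolded z(1)] z(2,3) ab(3)[unfolded I_def]]
        z \<open>a \<noteq> u\<close> u_ends
      by (auto simp: S_def N_def v_def Far_def)
  qed
  then show "\<not> inf_indep_paths apex_graph_V apex_graph_E v u" "\<not> inf_indep_paths apex_graph_V apex_graph_E u v"
    using not_inf_indep_paths_if_finite_separator[OF symp_apex_graph_E \<open>finite S\<close> assms(2)[folded v_def]
        \<open>v \<in> I\<close> \<open>u \<notin> I\<close> _ \<open>v \<notin> S\<close>]
    by (auto simp: S_def)
qed

lemma apex_graph_apex_infinity_separated:
  "\<not> inf_indep_paths apex_graph_V apex_graph_E apex (farey_vertex None)"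
  "\<not> inf_indep_paths apex_graph_V apex_graph_E (farey_vertex None) apex"
proof -
  define I where "I = insert apex ((farey_vertex \<circ> Some) ` {0<..<1})"
  define S where "S = {farey_vertex (Some 0), farey_vertex (Some 1)}"
  have edge: "a \<in> S \<or> b \<in> S \<or> (a = apex \<and> b = farey_vertex None)" if ab: "apex_graph_E a b" "a \<in> I" "b \<notin> I" for a b
  proof (cases "a = apex")
    case True
    then obtain c where "c \<in> apex_nbrs" "b = farey_vertex (Some c)" using ab(1)
      by (auto simp: apex_graph_E_def)
    then show ?thesis using apex_nbrs_subset_01 ab(3) by (fastforce simp: I_def S_def)
  next
    case False
    then obtain z where z: "a = farey_vertex (Some z)" "0 < z" "z < 1" using ab(2) by (auto simp: I_def)
    then obtain y where "b = farey_vertex y" "farey_adj (Some z) y"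
      using ab by (auto simp: apex_graph_E_def I_def)
    then show ?thesis using farey_adj_inside[OF farey_adj_0_half_1(3) z(2,3)] ab(3)
      by (fastforce simp: I_def S_def)
  qed
  have "finite S" "farey_vertex None \<noteq> apex" "apex \<in> I" "farey_vertex None \<notin> I"
    "farey_vertex None \<notin> S" "apex \<notin> S"
    by (auto simp: S_def I_def)
  from not_inf_indep_paths_if_finite_separator[OF symp_apex_graph_E this edge]
  show "\<not> inf_indep_paths apex_graph_V apex_graph_E apex (farey_vertex None)"
    "\<not> inf_indep_paths apex_graph_V apex_graph_E (farey_vertex None) apex" by blast+
qed

lemma Pi_graph_apex_graph: "Pi_graph apex_graph_V apex_graph_E"
  unfolding Pi_graph_def
proof (intro conjI ballI impI inf_edge_connected_apex_graph)
  fix u v assume uv: "u \<in> apex_graph_V" "v \<in> apex_graph_V" "u \<noteq> v"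
  show "\<not> inf_indep_paths apex_graph_V apex_graph_E u v"
  proof (cases "\<exists>q. u = farey_vertex (Some q) \<or> v = farey_vertex (Some q)")
    case True
    then show ?thesis using apex_graph_rational_separated uv by metis
  next
    case False
    then have "u \<in> {apex, farey_vertex None}" "v \<in> {apex, farey_vertex None}"
      using uv(1,2) apex_graph_V_cases by (metis insert_iff not_None_eq)+
    then show ?thesis using apex_graph_apex_infinity_separated uv(3) by auto
  qed
qed

lemma induced_farey_apex_graph: "induced_subgraph_emb UNIV farey_adj apex_graph_V apex_graph_E"
  unfolding induced_subgraph_emb_def
  by (intro exI[of _ farey_vertex]) (auto simp: inj_on_def apex_graph_V_def)

text \<open>The apex together with \<open>0\<close>, \<open>1/2\<close> and \<open>1\<close> spans a \<open>K\<^sub>4\<close>.\<close>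

lemma not_minor_apex_graph: "\<not> is_minor apex_graph_V apex_graph_E UNIV farey_adj"
proof
  define K where "K = {apex, farey_vertex (Some 0), farey_vertex (Some (1/2)), farey_vertex (Some 1)}"
  assume "is_minor apex_graph_V apex_graph_E UNIV farey_adj"
  moreover have "K \<subseteq> apex_graph_V" by (auto simp: K_def apex_graph_V_def)
  moreover have "apex_graph_E h h'" if "h \<in> K" "h' \<in> K" "h \<noteq> h'" for h h'
    using that farey_adj_0_half_1 farey_adj_sym by (auto simp: K_def apex_nbrs_def)
  ultimately have "is_minor K (\<noteq>) UNIV farey_adj" by (rule is_minor_complete_if_clique)
  moreover have "card K = 4" by (simp add: K_def)
  ultimately show False using farey_no_complete_minor[of K UNIV] by simp
qed

section \<open>A planar drawing\<close>

definition arch :: "real \<Rightarrow> real \<Rightarrow> (real \<times> real) set" where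
  "arch a b = {p. min a b \<le> fst p \<and> fst p \<le> max a b \<and> snd p = (fst p - a) * (b - fst p)}"

definition arch_path :: "real \<Rightarrow> real \<Rightarrow> real \<Rightarrow> real \<times> real" where
  "arch_path a b t = (a + t * (b - a), t * (1 - t) * (b - a)^2)"

lemma arch_commute: "arch a b = arch b a"
  unfolding arch_def by (auto simp: algebra_simps)

lemma path_image_arch_path_subset: "path_image (arch_path a b) \<subseteq> arch a b"
proof
  fix p assume "p \<in> path_image (arch_path a b)"
  then obtain t where t: "0 \<le> t" "t \<le> 1" "p = arch_path a b t" by (auto simp: path_image_def)
  have "min a b \<le> a + t * (b - a)"
  proof (cases "a \<le> b")
    case True then show ?thesis using t by (simp add: min_def)
  next
    case False
    then have "t * (b - a) \<ge> 1 * (b - a)" using t by (intro mult_right_mono_neg) auto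
    then have "t * (b - a) \<ge> b - a" by simp
    then have "a + t * (b - a) \<ge> b" by linarith
    then show ?thesis using False by (simp add: min_def)
  qed
  moreover have "a + t * (b - a) \<le> max a b"
  proof (cases "a \<le> b")
    case True
    then have "t * (b - a) \<le> 1 * (b - a)" using t by (intro mult_right_mono) auto
    then have "t * (b - a) \<le> b - a" by simp
    then have "a + t * (b - a) \<le> b" by linarith
    then show ?thesis using True by (simp add: max_def)
  next
    case False
    then have "t * (b - a) \<le> 0" using t by (simp add: mult_nonneg_nonpos)
    then show ?thesis using False by (simp add: max_def)
  qed
  moreover have "t * (1 - t) * (b - a)^2 = (a + t * (b - a) - a) * (b - (a + t * (b - a)))"
    by (simp add: algebra_simps power2_eq_square)
  ultimately show "p \<in> arch a b" using t by (simp add: arch_def arch_path_def)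
qed

lemma arch_props:
  assumes "p \<in> arch lo hi" "lo < hi"
  shows "snd p \<ge> 0" "snd p = 0 \<Longrightarrow> p = (lo, 0) \<or> p = (hi, 0)" "snd p > 0 \<Longrightarrow> lo < fst p \<and> fst p < hi"
proof -
  have f: "lo \<le> fst p" "fst p \<le> hi" "snd p = (fst p - lo) * (hi - fst p)" using assms
    by (auto simp: arch_def)
  show "snd p \<ge> 0" using f by simp
  show "snd p = 0 \<Longrightarrow> p = (lo, 0) \<or> p = (hi, 0)" using f by (cases p) auto
  show "snd p > 0 \<Longrightarrow> lo < fst p \<and> fst p < hi" using f by (auto simp: less_le)
qed

lemma arc_arch_path: "a \<noteq> b \<Longrightarrow> arc (arch_path a b)"
  unfolding arc_def path_def arch_path_def
proof (intro conjI)
  show "continuous_on {0..1} (\<lambda>t. (a + t * (b - a), t * (1 - t) * (b - a)^2))"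
    by (intro continuous_intros)
  assume "a \<noteq> b"
  then show "inj_on (\<lambda>t. (a + t * (b - a), t * (1 - t) * (b - a)^2)) {0..1}"
    by (auto simp: inj_on_def)
qed

lemma arch_path_ends: "pathstart (arch_path a b) = (a, 0)" "pathfinish (arch_path a b) = (b, 0)"
  by (simp_all add: pathstart_def pathfinish_def arch_path_def)

lemma nested_product_less:
  fixes lo1 hi1 lo2 hi2 s :: real
  assumes "lo1 \<le> lo2" "hi2 \<le> hi1" "lo1 < lo2 \<or> hi2 < hi1" "lo2 < s" "s < hi2"
  shows "(s - lo2) * (hi2 - s) < (s - lo1) * (hi1 - s)"
proof -
  have a: "0 < s - lo2" "s - lo2 \<le> s - lo1" "0 < hi2 - s" "hi2 - s \<le> hi1 - s" using assms by auto
  show ?thesis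
  proof (cases "lo1 < lo2")
    case True
    then have "s - lo2 < s - lo1" by simp
    then have "(s - lo2) * (hi2 - s) < (s - lo1) * (hi2 - s)" using a by simp
    also have "\<dots> \<le> (s - lo1) * (hi1 - s)" using a by (intro mult_left_mono) auto
    finally show ?thesis .
  next
    case False
    then have "hi2 - s < hi1 - s" using assms by simp
    then have "(s - lo2) * (hi2 - s) < (s - lo2) * (hi1 - s)" using a by simp
    also have "\<dots> \<le> (s - lo1) * (hi1 - s)" using a by (intro mult_right_mono) auto
    finally show ?thesis .
  qed
qed

lemma arches_meet_at_ends:
  assumes p: "p \<in> arch lo1 hi1" "p \<in> arch lo2 hi2" and lh: "lo1 < hi1" "lo2 < hi2"
    and ne: "(lo1, hi1) \<noteq> (lo2, hi2)"
    and nc1: "\<not> (lo1 < lo2 \<and> lo2 < hi1 \<and> hi1 < hi2)"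
    and nc2: "\<not> (lo2 < lo1 \<and> lo1 < hi2 \<and> hi2 < hi1)"
  shows "p = (lo1, 0) \<or> p = (hi1, 0)"
proof (cases "snd p = 0")
  case True then show ?thesis using arch_props[OF p(1) lh(1)] by simp
next
  case False
  then have pos: "snd p > 0" using arch_props(1)[OF p(1) lh(1)] by simp
  define s where "s = fst p"
  have i1: "lo1 < s" "s < hi1" using arch_props(3)[OF p(1) lh(1) pos] by (auto simp: s_def)
  have i2: "lo2 < s" "s < hi2" using arch_props(3)[OF p(2) lh(2) pos] by (auto simp: s_def)
  have e: "(s - lo1) * (hi1 - s) = (s - lo2) * (hi2 - s)" using p by (simp add: arch_def s_def)
  consider "lo1 \<le> lo2 \<and> hi2 \<le> hi1" | "lo2 \<le> lo1 \<and> hi1 \<le> hi2"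
    using nc1 nc2 i1 i2 by linarith
  then show ?thesis
  proof cases
    case 1
    then have "lo1 < lo2 \<or> hi2 < hi1" using ne by auto
    then show ?thesis using nested_product_less[of lo1 lo2 hi2 hi1 s] 1 i2 e by simp
  next
    case 2
    then have "lo2 < lo1 \<or> hi1 < hi2" using ne by auto
    then show ?thesis using nested_product_less[of lo2 lo1 hi1 hi2 s] 2 i1 e by simp
  qed
qed

lemma infinity_segment_param:
  assumes "p \<in> closed_segment (0, -1) (n, 0 :: real)"
  shows "\<exists>t::real. 0 \<le> t \<and> t \<le> 1 \<and> p = (t * n, t - 1)"
proof -
  obtain u where u: "0 \<le> u" "u \<le> 1" "p = (1 - u) *\<^sub>R (0, -1) + u *\<^sub>R (n, 0)"
    using assms by (auto simp: in_segment)
  then show ?thesis by (intro exI[of _ u]) (auto simp: algebra_simps)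
qed

lemma apex_segment_param:
  assumes "p \<in> closed_segment (1/2, -1/4) (c, 0 :: real)"
  shows "\<exists>s::real. 0 \<le> s \<and> s \<le> 1 \<and> p = ((1 - s) / 2 + s * c, - (1 - s) / 4)"
proof -
  obtain u where u: "0 \<le> u" "u \<le> 1" "p = (1 - u) *\<^sub>R (1/2, -1/4) + u *\<^sub>R (c, 0)"
    using assms by (auto simp: in_segment)
  have "(1 - u) *\<^sub>R (1/2, -1/4) + u *\<^sub>R (c, 0) = ((1 - u) / 2 + u * c, - (1 - u) / (4::real))"
    by (simp add: field_simps)
  then have eq: "p = ((1 - u) / 2 + u * c, - (1 - u) / 4)" using u(3) by simp
  show ?thesis using u(1,2) eq by blast
qed

lemma infinity_apex_segments_meet:
  assumes p2: "p \<in> closed_segment (0, -1) (of_int k :: real, 0 :: real)"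
    and p3: "p \<in> closed_segment (1/2, -1/4) (c, 0 :: real)" and c: "0 \<le> c" "c \<le> 1"
  shows "p = (c, 0)"
proof -
  obtain t where t: "0 \<le> t" "t \<le> 1" "p = (t * of_int k, t - 1)"
    using infinity_segment_param[OF p2] by blast
  obtain s where s: "0 \<le> s" "s \<le> 1" "p = ((1 - s) / 2 + s * c, - (1 - s) / 4)"
    using apex_segment_param[OF p3] by blast
  have ty: "t - 1 = - (1 - s) / 4" using t s by simp
  have tx: "t * of_int k = (1 - s) / 2 + s * c" using t s by simp
  have sc: "0 \<le> s * c" "s * c \<le> s" using s c by (auto simp: mult_left_le)
  have "s = 1"
  proof (cases "k \<ge> 1")
    case True
    then have "t * of_int k \<ge> t * 1" using t by (intro mult_left_mono) auto
    then have "t * of_int k \<ge> t" by simp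
    then have "s \<ge> 1" using tx ty sc s(1,2) by argo
    then show ?thesis using s(2) by simp
  next
    case False
    show ?thesis
    proof (cases "k = 0")
      case True
      then have "(1 - s) / 2 + s * c = 0" using tx by simp
      then have "s \<ge> 1" using sc s(1,2) by argo
      then show ?thesis using s(2) by simp
    next
      case False
      then have "k \<le> -1" using \<open>\<not> k \<ge> 1\<close> by simp
      then have "t * of_int k \<le> t * (-1)" using t by (intro mult_left_mono) auto
      then have "t * of_int k \<le> - t" by simp
      then have "s \<ge> 1" using tx ty sc s(1,2) by argo
    then show ?thesis using s(2) by simp
    qed
  qed
  then show ?thesis using s by simp
qed

definition drawing_pos :: "nat \<Rightarrow> real \<times> real" where
  "drawing_pos n = (if n = apex then (1/2, -1/4) else
     (case (from_nat (n div 2) :: rat option) of None \<Rightarrow> (0, -1) | Some q \<Rightarrow> (of_rat q, 0)))"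

lemma drawing_pos_farey_vertex: "drawing_pos (farey_vertex x) = (case x of None \<Rightarrow> (0, -1) | Some q \<Rightarrow> (of_rat q, 0))"
proof -
  have "farey_vertex x \<noteq> apex" by simp
  moreover have "farey_vertex x div 2 = to_nat x" by (simp add: farey_vertex_def)
  ultimately show ?thesis by (simp add: drawing_pos_def)
qed

lemma drawing_pos_simps [simp]: "drawing_pos apex = (1/2, -1/4)" "drawing_pos (farey_vertex None) = (0, -1)" "drawing_pos (farey_vertex (Some q)) = (of_rat q, 0)"
  by (simp_all add: drawing_pos_farey_vertex) (simp add: drawing_pos_def)

definition drawing_arc :: "nat \<Rightarrow> nat \<Rightarrow> real \<Rightarrow> real \<times> real" where
  "drawing_arc u v = (if u \<noteq> apex \<and> v \<noteq> apex \<and> u \<noteq> farey_vertex None \<and> v \<noteq> farey_vertex None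
      then arch_path (fst (drawing_pos u)) (fst (drawing_pos v)) else linepath (drawing_pos u) (drawing_pos v))"

lemma drawing_pos_image: "p \<in> drawing_pos ` apex_graph_V \<longleftrightarrow> p = (1/2, -1/4) \<or> p = (0, -1) \<or> (\<exists>q. p = (of_rat q, 0))"
proof
  assume "p \<in> drawing_pos ` apex_graph_V"
  then obtain n where n: "n \<in> apex_graph_V" "p = drawing_pos n" by blast
  then consider "n = apex" | x where "n = farey_vertex x" using apex_graph_V_cases by blast
  then show "p = (1/2, -1/4) \<or> p = (0, -1) \<or> (\<exists>q. p = (of_rat q, 0))"
  proof cases
    case 1 then show ?thesis using n by simp
  next
    case 2 then show ?thesis using n by (cases x) auto
  qed
next
  assume "p = (1/2, -1/4) \<or> p = (0, -1) \<or> (\<exists>q. p = (of_rat q, 0))"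
  moreover have "apex \<in> apex_graph_V" "farey_vertex x \<in> apex_graph_V" for x
    by (auto simp: apex_graph_V_def)
  ultimately show "p \<in> drawing_pos ` apex_graph_V" by (metis image_eqI drawing_pos_simps)
qed

lemma farey_edges_nest:
  assumes "farey_adj (Some x1) (Some y1)" "x1 < y1" "farey_adj (Some x2) (Some y2)" "x2 < y2"
  shows "\<not> (x1 < x2 \<and> x2 < y1 \<and> y1 < y2)"
proof
  assume h: "x1 < x2 \<and> x2 < y1 \<and> y1 < y2"
  have "Some y2 \<noteq> Some x1" "Some y2 \<noteq> Some y1" using h assms by auto
  then obtain t where "Some y2 = Some t" "x1 < t" "t < y1"
    using farey_adj_inside[OF assms(1), of x2 "Some y2"] h assms(3) by blast
  then show False using h by simp
qed

lemma infinity_segment_props: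
  assumes "p \<in> closed_segment (0, -1) (of_int k :: real, 0 :: real)"
  shows "snd p \<le> 0" "snd p = 0 \<Longrightarrow> p = (of_int k, 0)" "p \<noteq> (1/2, -1/4)"
proof -
  obtain t :: real where t: "0 \<le> t" "t \<le> 1" "p = (t * of_int k, t - 1)"
    using infinity_segment_param[OF assms] by blast
  show "snd p \<le> 0" using t by simp
  show "snd p = 0 \<Longrightarrow> p = (of_int k, 0)" using t by simp
  show "p \<noteq> (1/2, -1/4)"
  proof
    assume "p = (1/2, -1/4)"
    then have t34: "t = 3/4" "t * of_int k = 1/2" using t by auto
    have "(3/4) * (of_int k :: real) = 1/2" using t34(2)[unfolded t34(1)] .
    then have "3 * (of_int k :: real) = 2" by linarith
    then have "(of_int (3 * k) :: real) = of_int 2" by simp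
    then have "3 * k = 2" by (simp only: of_int_eq_iff)
    then show False by presburger
  qed
qed

lemma apex_segment_props:
  assumes "p \<in> closed_segment (1/2, -1/4) (c :: real, 0 :: real)"
  shows "snd p \<le> 0" "snd p = 0 \<Longrightarrow> p = (c, 0)" "snd p \<ge> -1/4"
proof -
  obtain s :: real where s: "0 \<le> s" "s \<le> 1" "p = ((1 - s) / 2 + s * c, - (1 - s) / 4)"
    using apex_segment_param[OF assms] by blast
  show "snd p \<le> 0" using s by simp
  show "snd p = 0 \<Longrightarrow> p = (c, 0)" using s by simp
  show "snd p \<ge> -1/4" using s by simp
qed

lemma infinity_segments_meet:
  assumes "p \<in> closed_segment (0, -1) (of_int k :: real, 0 :: real)" "p \<in> closed_segment (0, -1) (of_int k' :: real, 0 :: real)"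
    "k \<noteq> k'"
  shows "p = (0, -1)"
proof -
  obtain t :: real where t: "0 \<le> t" "t \<le> 1" "p = (t * of_int k, t - 1)"
    using infinity_segment_param[OF assms(1)] by blast
  obtain t' :: real where t': "0 \<le> t'" "t' \<le> 1" "p = (t' * of_int k', t' - 1)"
    using infinity_segment_param[OF assms(2)] by blast
  have "t = t'" using t t' by simp
  have "t * of_int k = t' * of_int k'" using t(3) t'(3) by (metis fst_conv)
  then have "t * of_int k = t * of_int k'" using \<open>t = t'\<close> by simp
  then have "t * (of_int k - of_int k') = 0" by (simp add: right_diff_distrib)
  moreover have "(of_int k :: real) - of_int k' \<noteq> 0" using assms(3) by simp
  ultimately have "t = 0" by simp
  then show ?thesis using t by simp
qed

lemma apex_segments_meet:
  assumes "p \<in> closed_segment (1/2, -1/4) (c :: real, 0 :: real)" "p \<in> closed_segment (1/2, -1/4) (c' :: real, 0 :: real)"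
    "c \<noteq> c'"
  shows "p = (1/2, -1/4)"
proof -
  obtain s :: real where s: "0 \<le> s" "s \<le> 1" "p = ((1 - s) / 2 + s * c, - (1 - s) / 4)"
    using apex_segment_param[OF assms(1)] by blast
  obtain s' :: real where s': "0 \<le> s'" "s' \<le> 1" "p = ((1 - s') / 2 + s' * c', - (1 - s') / 4)" using apex_segment_param[OF assms(2)] by blast
  have "s = s'" using s s' by simp
  have "(1 - s) / 2 + s * c = (1 - s') / 2 + s' * c'" using s(3) s'(3) by (metis fst_conv)
  then have "s * c = s * c'" using \<open>s = s'\<close> by simp
  then have "s * (c - c') = 0" by (simp add: right_diff_distrib)
  then have "s = 0" using assms(3) by simp
  then show ?thesis using s by simp
qed

lemma drawing_pos_snd: "p \<in> drawing_pos ` apex_graph_V \<Longrightarrow> snd p \<le> 0 \<and> (snd p = 0 \<longrightarrow> (\<exists>q. p = (of_rat q, 0)))"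
  unfolding drawing_pos_image by auto

lemma inj_on_drawing_pos: "inj_on drawing_pos apex_graph_V"
proof (rule inj_onI)
  fix m n assume mn: "m \<in> apex_graph_V" "n \<in> apex_graph_V" "drawing_pos m = drawing_pos n"
  from apex_graph_V_cases[OF mn(1)] apex_graph_V_cases[OF mn(2)] show "m = n"
  proof (elim disjE exE)
    fix x y assume "m = farey_vertex x" "n = farey_vertex y"
    then show "m = n" using mn(3) by (cases x; cases y) auto
  next
    fix x assume "m = apex" "n = farey_vertex x"
    then show "m = n" using mn(3) by (cases x) auto
  next
    fix x assume "m = farey_vertex x" "n = apex"
    then show "m = n" using mn(3) by (cases x) auto
  qed simp
qed

lemma drawing_arc_arc:
  assumes e: "apex_graph_E u v"
  shows "arc (drawing_arc u v)" "pathstart (drawing_arc u v) = drawing_pos u"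
    "pathfinish (drawing_arc u v) = drawing_pos v"
proof -
  have "u \<in> apex_graph_V" "v \<in> apex_graph_V" "u \<noteq> v"
    using e simple_graph_apex_graph by (auto simp: simple_graph_def)
  then have "drawing_pos u \<noteq> drawing_pos v" using inj_on_drawing_pos by (auto dest: inj_onD)
  have "arc (drawing_arc u v) \<and> pathstart (drawing_arc u v) = drawing_pos u \<and>
    pathfinish (drawing_arc u v) = drawing_pos v"
  proof (cases "u \<noteq> apex \<and> v \<noteq> apex \<and> u \<noteq> farey_vertex None \<and> v \<noteq> farey_vertex None")
    case True
    then obtain a b where "u = farey_vertex (Some a)" "v = farey_vertex (Some b)"
      using \<open>u \<in> apex_graph_V\<close> \<open>v \<in> apex_graph_V\<close>
        by (metis apex_graph_V_cases not_None_eq)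
    then show ?thesis using True \<open>drawing_pos u \<noteq> drawing_pos v\<close>
      by (simp add: drawing_arc_def arc_arch_path arch_path_ends)
  next
    case False
    then show ?thesis using \<open>drawing_pos u \<noteq> drawing_pos v\<close>
      by (auto simp: drawing_arc_def arc_linepath)
  qed
  then show "arc (drawing_arc u v)" "pathstart (drawing_arc u v) = drawing_pos u"
    "pathfinish (drawing_arc u v) = drawing_pos v" by auto
qed

lemma path_image_drawing_arc_cases:
  assumes e: "apex_graph_E u v"
  obtains (arch) a b where "{u, v} = {farey_vertex (Some a), farey_vertex (Some b)}" "a < b"
      "farey_adj (Some a) (Some b)" "path_image (drawing_arc u v) \<subseteq> arch (of_rat a) (of_rat b)"
  | (infinity) k where "{u, v} = {farey_vertex None, farey_vertex (Some (of_int k))}"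
      "path_image (drawing_arc u v) = closed_segment (0, -1) (of_int k, 0)"
  | (apex) c where "c \<in> apex_nbrs" "{u, v} = {apex, farey_vertex (Some c)}"
      "path_image (drawing_arc u v) = closed_segment (1/2, -1/4) (of_rat c, 0)"
proof -
  have infinity_int: "\<exists>k. b = of_int k" if "farey_adj None (Some b)" for b
    using that rat_den_1_imp_int by (auto simp: farey_adj_None_Some)
  from e consider (ff) x y where "u = farey_vertex x" "v = farey_vertex y" "farey_adj x y"
    | (au) c where "c \<in> apex_nbrs" "{u, v} = {apex, farey_vertex (Some c)}" "u = apex"
    | (ua) c where "c \<in> apex_nbrs" "{u, v} = {apex, farey_vertex (Some c)}" "v = apex"
    unfolding apex_graph_E_def by blast
  then show ?thesis
  proof cases
    case ff
    have "x \<noteq> y" using ff(3) farey_adj_irrefl by auto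
    then consider (NS) b where "x = None" "y = Some b" | (SN) a where "x = Some a" "y = None"
      | (SS) a b where "x = Some a" "y = Some b" "a \<noteq> b"
      using farey_adj_None_None by (cases x; cases y) auto
    then show ?thesis
    proof cases
      case NS
      then obtain k where "b = of_int k" using ff(3) infinity_int by blast
      then show ?thesis using infinity[of k] ff NS by (simp add: drawing_arc_def)
    next
      case SN
      then obtain k where "a = of_int k" using ff(3) infinity_int farey_adj_commute by blast
      then show ?thesis using infinity[of k] ff SN
        by (simp add: drawing_arc_def closed_segment_commute insert_commute)
    next
      case SS
      have "path_image (drawing_arc u v) \<subseteq> arch (of_rat a) (of_rat b)"
        using ff SS path_image_arch_path_subset by (simp add: drawing_arc_def)
      then show ?thesis using arch[of a b] arch[of b a] ff SS arch_commute farey_adj_commute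
        by (cases "a < b") (auto simp: insert_commute)
    qed
  next
    case au
    then show ?thesis using apex[of c] by (auto simp: drawing_arc_def doubleton_eq_iff)
  next
    case ua
    then show ?thesis using apex[of c]
      by (auto simp: drawing_arc_def doubleton_eq_iff closed_segment_commute)
  qed
qed

lemma drawing_arc_on_axis:
  assumes e: "apex_graph_E u v" and p: "p \<in> path_image (drawing_arc u v)" "snd p = 0"
  shows "p \<in> {drawing_pos u, drawing_pos v}"
  using e
proof (cases rule: path_image_drawing_arc_cases)
  case (arch a b)
  then have "p \<in> arch (of_rat a) (of_rat b)" "(of_rat a :: real) < of_rat b" using p(1)
    by (auto simp: of_rat_less)
  then have "p = (of_rat a, 0) \<or> p = (of_rat b, 0)" using p(2) by (rule arch_props(2))
  then show ?thesis using arch(1) by (auto simp: doubleton_eq_iff)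
next
  case (infinity k)
  then have "p = (of_int k, 0)" using p infinity_segment_props(2) by auto
  then show ?thesis using infinity(1) by (auto simp: doubleton_eq_iff)
next
  case (apex c)
  then have "p = (of_rat c, 0)" using p apex_segment_props(2) by auto
  then show ?thesis using apex(2) by (auto simp: doubleton_eq_iff)
qed

lemma drawing_arc_vertices:
  assumes e: "apex_graph_E u v"
  shows "path_image (drawing_arc u v) \<inter> drawing_pos ` apex_graph_V = {drawing_pos u, drawing_pos v}"
proof
  have "u \<in> apex_graph_V" "v \<in> apex_graph_V" using e simple_graph_apex_graph
    by (auto simp: simple_graph_def)
  then show "{drawing_pos u, drawing_pos v} \<subseteq> path_image (drawing_arc u v) \<inter> drawing_pos ` apex_graph_V"
    using drawing_arc_arc[OF e] pathstart_in_path_image pathfinish_in_path_image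
      by (metis Int_iff image_eqI insert_subsetI empty_subsetI)
next
  show "path_image (drawing_arc u v) \<inter> drawing_pos ` apex_graph_V \<subseteq> {drawing_pos u, drawing_pos v}"
  proof
    fix p assume "p \<in> path_image (drawing_arc u v) \<inter> drawing_pos ` apex_graph_V"
    then have p: "p \<in> path_image (drawing_arc u v)" "p \<in> drawing_pos ` apex_graph_V" by auto
    show "p \<in> {drawing_pos u, drawing_pos v}"
    proof (cases "snd p = 0")
      case True
      then show ?thesis using drawing_arc_on_axis[OF e p(1)] by blast
    next
      case False
      then have p_off: "p = (1/2, -1/4) \<or> p = (0, -1)" using p(2) by (auto simp: drawing_pos_image)
      from e show ?thesis
      proof (cases rule: path_image_drawing_arc_cases)
        case (arch a b)
        then have "p \<in> arch (of_rat a) (of_rat b)" "(of_rat a :: real) < of_rat b"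
          using p(1) by (auto simp: of_rat_less)
        then have "0 \<le> snd p" by (rule arch_props(1))
        then show ?thesis using drawing_pos_snd[OF p(2)] False by simp
      next
        case (infinity k)
        then have "p = (0, -1)" using p(1) p_off infinity_segment_props(3) by auto
        then show ?thesis using infinity(1) by (auto simp: doubleton_eq_iff)
      next
        case (apex c)
        then have "p = (1/2, -1/4)" using p(1) p_off apex_segment_props(3) by fastforce
        then show ?thesis using apex(2) by (auto simp: doubleton_eq_iff)
      qed
    qed
  qed
qed

lemma drawing_arcs_meet_in_vertices:
  assumes e1: "apex_graph_E u v" and e2: "apex_graph_E u' v'" and ne: "{u, v} \<noteq> {u', v'}"
  shows "path_image (drawing_arc u v) \<inter> path_image (drawing_arc u' v') \<subseteq> drawing_pos ` apex_graph_V"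
proof clarify
  fix p assume p1: "p \<in> path_image (drawing_arc u v)" and p2: "p \<in> path_image (drawing_arc u' v')"
  have "u \<in> apex_graph_V" "v \<in> apex_graph_V" using e1 simple_graph_apex_graph
    by (auto simp: simple_graph_def)
  then have on_axis: "p \<in> drawing_pos ` apex_graph_V" if "snd p = 0"
    using drawing_arc_on_axis[OF e1 p1 that] by auto
  have pos: "(of_rat q, 0) \<in> drawing_pos ` apex_graph_V" "(0, -1) \<in> drawing_pos ` apex_graph_V"
    "(1/2, -1/4) \<in> drawing_pos ` apex_graph_V" for q
    by (auto simp: drawing_pos_image)
  have above: "0 \<le> snd p" if "p \<in> path_image (drawing_arc x y)" "a < b"
    "path_image (drawing_arc x y) \<subseteq> arch (of_rat a) (of_rat b)" for x y a b
    using that arch_props(1)[of p "of_rat a" "of_rat b"] by (auto simp: of_rat_less)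
  from e1 show "p \<in> drawing_pos ` apex_graph_V"
  proof (cases rule: path_image_drawing_arc_cases)
    case (arch a b)
    note ab = this
    from e2 show ?thesis
    proof (cases rule: path_image_drawing_arc_cases)
      case (arch a' b')
      then have "(a, b) \<noteq> (a', b')" using ne ab(1) by auto
      moreover have "p \<in> arch (of_rat a) (of_rat b)" "p \<in> arch (of_rat a') (of_rat b')"
        using p1 p2 ab(4) arch(4) by auto
      ultimately have "p = (of_rat a, 0) \<or> p = (of_rat b, 0)"
        using arches_meet_at_ends[of p "of_rat a" "of_rat b" "of_rat a'" "of_rat b'"] ab(2) arch(2)
          farey_edges_nest[OF ab(3) ab(2) arch(3) arch(2)] farey_edges_nest[OF arch(3) arch(2) ab(3) ab(2)]
        by (auto simp: of_rat_less)
      then show ?thesis using pos by auto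
    next
      case (infinity k)
      then show ?thesis using on_axis above[OF p1 ab(2,4)] p2 infinity_segment_props(1)[of p k] by force
    next
      case (apex c)
      then show ?thesis using on_axis above[OF p1 ab(2,4)] p2 apex_segment_props(1)[of p] by force
    qed
  next
    case (infinity k)
    note k = this
    from e2 show ?thesis
    proof (cases rule: path_image_drawing_arc_cases)
      case (arch a b)
      then show ?thesis using on_axis above[OF p2 arch(2,4)] p1 k(2) infinity_segment_props(1)[of p k] by force
    next
      case (infinity k')
      then have "k \<noteq> k'" using ne k(1) by auto
      then have "p = (0, -1)" using infinity_segments_meet[of p k k'] p1 p2 k(2) infinity(2) by simp
      then show ?thesis using pos by simp
    next
      case (apex c)
      then have "p = (of_rat c, 0)"
        using infinity_apex_segments_meet[of p k "of_rat c"] p1 p2 k(2) apex_nbrs_subset_01 by simp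
      then show ?thesis using pos by simp
    qed
  next
    case (apex c)
    note c = this
    from e2 show ?thesis
    proof (cases rule: path_image_drawing_arc_cases)
      case (arch a b)
      then show ?thesis using on_axis above[OF p2 arch(2,4)] p1 c(3) apex_segment_props(1)[of p] by force
    next
      case (infinity k)
      then have "p = (of_rat c, 0)"
        using infinity_apex_segments_meet[of p k "of_rat c"] p1 p2 c(1,3) apex_nbrs_subset_01 by simp
      then show ?thesis using pos by simp
    next
      case (apex c')
      then have "c \<noteq> c'" using ne c(2) by auto
      then have "p = (1/2, -1/4)"
        using apex_segments_meet[of p "of_rat c" "of_rat c'"] p1 p2 c(3) apex(3) by simp
      then show ?thesis using pos by simp
    qed
  qed
qed

lemma planar_apex_graph: "planar apex_graph_V apex_graph_E"
  unfolding planar_def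
  using inj_on_drawing_pos drawing_arc_arc drawing_arc_vertices drawing_arcs_meet_in_vertices by blast

theorem proposition3p1:
  shows "\<exists>(V :: nat set) E. simple_graph V E \<and> countable V \<and> planar V E \<and> Pi_graph V E \<and>
           induced_subgraph_emb (UNIV :: rat option set) farey_adj V E \<and>
           \<not> is_minor V E (UNIV :: rat option set) farey_adj"
proof (intro exI conjI)
  show "simple_graph apex_graph_V apex_graph_E" by (rule simple_graph_apex_graph)
  show "countable apex_graph_V" by simp
  show "planar apex_graph_V apex_graph_E" by (rule planar_apex_graph)
  show "Pi_graph apex_graph_V apex_graph_E" by (rule Pi_graph_apex_graph)
  show "induced_subgraph_emb UNIV farey_adj apex_graph_V apex_graph_E" by (rule induced_farey_apex_graph)
  show "\<not> is_minor apex_graph_V apex_graph_E UNIV farey_adj" by (rule not_minor_apex_graph)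
qed

end
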